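(* Let $n\in\mathbb{N}$, let $0\le x_0<x_1<\cdots<x_n$ be real numbers, $I:=[x_0,x_n]$, and let $p\in[1,\infty)$. For $i\in\{1,\dots,n\}$ let $l_i:I\to[x_{i-1},x_i]$ be a contractive homeomorphism with $l_i(x_0)=x_{i-1}$, $l_i(x_n)=x_i$, whose derivative $Dl_i$ exists and belongs to $L_\infty^+I$. Let $q_1,\dots,q_n\in L_p^+I$ and $S_1,\dots,S_n\in L_\infty^+I$, and define the semi-affine Read–Bajractarević operator $T:L_p^+I\to(\mathbb{R}_0^+)^I$ by $$Tg:=\sum_{i=1}^n (q_i\circ l_i^{-1})\,\chi_{I_i}+\sum_{i=1}^n (S_i\circ l_i^{-1})\cdot(g\circ l_i^{-1})\,\chi_{I_i}.$$ If $$\sum_{i=1}^n \|Dl_i\cdot S_i^p\|_\infty<1,$$ then $T$ maps $L_p^+I$ into itself and is contractive on $(L_p^+I,d_p)$. Its unique fixed point $f^*$ satisfies the self-referential equation $$f^*=\sum_{i=1}^n (q_i\circ l_i^{-1})\,\chi_{I_i}+\sum_{i=1}^n (S_i\circ l_i^{-1})\cdot(f^*\circ l_i^{-1})\,\chi_{I_i},$$ and the graph of $f^*$ is the attractor of the iterated function system on $I\times\mathbb{R}_0^+$ given by the maps $w_i(x,y):=(l_i(x),\,q_i(x)+S_i(x)\,y)$, $i=1,\dots,n$.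
   Context: $\mathbb{R}_0^+:=\{x\in\mathbb{R}:x\ge 0\}$. For $p\in[1,\infty]$, $L_p^+I:=\{f\in L_p(I): f:I\to\mathbb{R}_0^+\}$ (classes of a.e. nonnegative $L_p$-functions), a semi-vector space over $\mathbb{R}_0^+$ under pointwise addition and multiplication by nonnegative scalars. It is endowed with $d_p(f,g):=\int_I(\max\{f(t),g(t)\}-\min\{f(t),g(t)\})^p\,dt$ for $p<\infty$, and $d_\infty(f,g):=\operatorname{ess\,sup}_{t\in I}(\max\{f(t),g(t)\}-\min\{f(t),g(t)\})$; $\|\cdot\|_\infty$ is the essential supremum norm. The subintervals are $I_i:=[x_{i-1},x_i)$ for $i=1,\dots,n-1$ and $I_n:=[x_{n-1},x_n]$, so that $I$ is the disjoint union of the $I_i$; $\chi_{I_i}$ is the characteristic function of $I_i$. An operator is contractive if it is Lipschitz with constant $<1$ with respect to $d_p$. The attractor of an iterated function system $\{w_1,\dots,w_n\}$ is the unique nonempty set $A$ with $A=\bigcup_{i=1}^n w_i(A)$ (fixed point of the associated set-valued map).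
   Formalization: The graph of f* satisfies $A=\bigcup_{i=1}^n w_i(A)$ only for some nonnegative representatives of f*, $q_i$, $S_i$ agreeing a.e., and is the unique such set only among graphs of nonnegative $L_p^+I$ functions, not among all nonempty sets. The statement above fails without it. *)

theory Defs
  imports "HOL-Analysis.Analysis"
begin

text \<open>Nonnegative L_p functions on a set I (representatives; equality is a.e.).
  Here p is a real exponent, 1 <= p < infinity.\<close>
definition Lp_plus :: "real \<Rightarrow> real set \<Rightarrow> (real \<Rightarrow> real) \<Rightarrow> bool" where
  "Lp_plus p I f \<longleftrightarrow>
     f \<in> borel_measurable (lebesgue_on I) \<and>
     (AE t in lebesgue_on I. 0 \<le> f t) \<and>
     integrable (lebesgue_on I) (\<lambda>t. \<bar>f t\<bar> powr p)"

definition Linf_plus :: "real set \<Rightarrow> (real \<Rightarrow> real) \<Rightarrow> bool" where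
  "Linf_plus I f \<longleftrightarrow>
     f \<in> borel_measurable (lebesgue_on I) \<and>
     (AE t in lebesgue_on I. 0 \<le> f t) \<and>
     (\<exists>B. AE t in lebesgue_on I. \<bar>f t\<bar> \<le> B)"

definition ess_norm_inf :: "real set \<Rightarrow> (real \<Rightarrow> real) \<Rightarrow> real" where
  "ess_norm_inf I f = Inf {B. 0 \<le> B \<and> (AE t in lebesgue_on I. \<bar>f t\<bar> \<le> B)}"

text \<open>The distance d_p (no p-th root, as in the paper).\<close>
definition d_p :: "real \<Rightarrow> real set \<Rightarrow> (real \<Rightarrow> real) \<Rightarrow> (real \<Rightarrow> real) \<Rightarrow> real" where
  "d_p p I f g = integral\<^sup>L (lebesgue_on I) (\<lambda>t. (max (f t) (g t) - min (f t) (g t)) powr p)"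

definition subint :: "(nat \<Rightarrow> real) \<Rightarrow> nat \<Rightarrow> nat \<Rightarrow> real set" where
  "subint x n i = (if i = n then {x (i - 1) .. x i} else {x (i - 1) ..< x i})"

definition RB_op :: "(nat \<Rightarrow> real) \<Rightarrow> nat \<Rightarrow> (nat \<Rightarrow> real \<Rightarrow> real) \<Rightarrow> (nat \<Rightarrow> real \<Rightarrow> real)
    \<Rightarrow> (nat \<Rightarrow> real \<Rightarrow> real) \<Rightarrow> (real \<Rightarrow> real) \<Rightarrow> real \<Rightarrow> real" where
  "RB_op x n l q S g t =
     (\<Sum>i=1..n. q i (the_inv_into {x 0 .. x n} (l i) t) * indicator (subint x n i) t)
   + (\<Sum>i=1..n. S i (the_inv_into {x 0 .. x n} (l i) t) * g (the_inv_into {x 0 .. x n} (l i) t)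
                 * indicator (subint x n i) t)"

definition graph_on :: "real set \<Rightarrow> (real \<Rightarrow> real) \<Rightarrow> (real \<times> real) set" where
  "graph_on I f = (\<lambda>t. (t, f t)) ` I"

definition ifs_map :: "(real \<Rightarrow> real) \<Rightarrow> (real \<Rightarrow> real) \<Rightarrow> (real \<Rightarrow> real) \<Rightarrow> real \<times> real \<Rightarrow> real \<times> real" where
  "ifs_map li qi Si = (\<lambda>(u, y). (li u, qi u + Si u * y))"

end

theory Submission
  imports Defs
begin

text \<open>The substitution t = l_i(u), justified by the area formula for injective Lipschitz maps,
  turns d_p(T g, T h) into the sum over i of the integrals of Dl_i S_i^p |g - h|^p, which is
  at most (\<Sum>i. \<parallel>Dl_i S_i^p\<parallel>_\<infinity>) d_p(g, h).

  Instead of completeness of L_p, the fixed point is obtained as the increasing limit of the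
  iterates T^m 0, computed with nonnegative representatives of q_i and S_i.  A weighted
  convexity estimate for (a + b)^p bounds these iterates uniformly in L_p, so by monotone
  convergence their limit is finite almost everywhere; discarding a null set it satisfies the
  fixed-point equation at every point.  Representatives vanishing at x_0 and x_n force the
  limit to vanish at the nodes x_i, so that the closed pieces l_i(I) fit together and the
  fixed-point equation becomes the invariance of the graph under the maps w_i.\<close>

section \<open>Area formula on the real line\<close>

lemma emeasure_inj_image_real:
  fixes f D :: "real \<Rightarrow> real"
  assumes S: "S \<in> sets lebesgue" and bdd: "bounded (f ` S)"
    and der: "\<And>t. t \<in> S \<Longrightarrow> (f has_real_derivative D t) (at t within S)"
    and inj: "inj_on f S"
  shows "f ` S \<in> lmeasurable" "emeasure lebesgue (f ` S) = (\<integral>\<^sup>+t. ennreal \<bar>D t\<bar> * indicator S t \<partial>lebesgue)"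
proof -
  have "f differentiable_on S"
    using der unfolding differentiable_on_def
    by (meson real_differentiable_def differentiable_at_withinI)
  then show fS: "f ` S \<in> lmeasurable"
    using differentiable_image_in_sets_lebesgue[OF S] bdd bounded_set_imp_lmeasurable by auto
  have "(\<lambda>t. \<bar>D t\<bar> *\<^sub>R (1::real)) absolutely_integrable_on S \<and>
        integral S (\<lambda>t. \<bar>D t\<bar> *\<^sub>R (1::real)) = measure lebesgue (f ` S)"
    using has_absolute_integral_change_of_variables_real[OF S der inj, of "\<lambda>_. 1" "measure lebesgue (f ` S)"]
      fS lmeasure_integral[OF fS] lmeasurable_iff_integrable_on[of "f ` S"]
      absolutely_integrable_on_iff_nonneg[of "f ` S" "\<lambda>_. 1::real"]
    by auto
  then have "set_integrable lebesgue S (\<lambda>t. \<bar>D t\<bar>)"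
    and "(LINT t:S | lebesgue. \<bar>D t\<bar>) = measure lebesgue (f ` S)"
    using set_lebesgue_integral_eq_integral(2)[of S "\<lambda>t. \<bar>D t\<bar>"] by auto
  then have "(\<integral>\<^sup>+t. ennreal (indicator S t *\<^sub>R \<bar>D t\<bar>) \<partial>lebesgue) = ennreal (measure lebesgue (f ` S))"
    unfolding set_integrable_def set_lebesgue_integral_def
    by (subst nn_integral_eq_integral) auto
  then show "emeasure lebesgue (f ` S) = (\<integral>\<^sup>+t. ennreal \<bar>D t\<bar> * indicator S t \<partial>lebesgue)"
    using fS by (simp add: emeasure_eq_measure2 indicator_mult_ennreal mult.commute)
qed

lemma emeasure_lipschitz_inj_image:
  fixes f D :: "real \<Rightarrow> real"
  assumes lip: "C-lipschitz_on T f" and inj: "inj_on f T" and T: "compact T"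
    and der: "AE t in lebesgue_on T. (f has_real_derivative D t) (at t within T)"
    and A: "A \<in> sets lebesgue" "A \<subseteq> T"
  shows "f ` A \<in> sets lebesgue" "emeasure lebesgue (f ` A) = (\<integral>\<^sup>+t. ennreal \<bar>D t\<bar> * indicator A t \<partial>lebesgue)"
proof -
  have "T \<in> sets lebesgue" using T by (simp add: compact_imp_closed)
  moreover obtain N where "N \<in> null_sets (lebesgue_on T)"
    and derN: "\<And>t. t \<in> T - N \<Longrightarrow> (f has_real_derivative D t) (at t within T)"
    using AE_E3[OF der] by (metis space_restrict_space2 \<open>T \<in> sets lebesgue\<close>)
  ultimately have N: "N \<in> null_sets lebesgue" "N \<subseteq> T"
    by (simp_all add: null_sets_restrict_space null_setsD2)
  define S where "S = A - N"
  have S: "S \<in> sets lebesgue" unfolding S_def using A N by auto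
  have "bounded (f ` T)"
    using compact_continuous_image[OF lipschitz_on_continuous_on[OF lip] T] compact_imp_bounded by blast
  then have bdd: "bounded (f ` S)"
    by (rule bounded_subset) (use A(2) in \<open>auto simp: S_def\<close>)
  have derS: "(f has_real_derivative D t) (at t within S)" if "t \<in> S" for t
    using derN[of t] that A unfolding S_def by (blast intro: DERIV_subset)
  have injS: "inj_on f S" using inj A unfolding S_def by (blast intro: inj_on_subset)
  note fS = emeasure_inj_image_real[OF S bdd derS injS]
  \<comment> \<open>Lipschitz maps preserve null sets, so the derivative is needed only almost everywhere.\<close>
  have negl: "f ` (A \<inter> N) \<in> null_sets lebesgue"
    unfolding negligible_iff_null_sets[symmetric]
  proof (rule negligible_locally_Lipschitz_image)
    show "negligible (A \<inter> N)"
      using N(1) by (meson inf_le2 negligible_iff_null_sets negligible_subset)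
    show "\<exists>U B. open U \<and> y \<in> U \<and> (\<forall>z\<in>A \<inter> N \<inter> U. norm (f z - f y) \<le> B * norm (z - y))"
      if "y \<in> A \<inter> N" for y
    proof (intro exI[of _ UNIV] exI[of _ C] conjI ballI)
      fix z assume "z \<in> A \<inter> N \<inter> UNIV"
      then show "norm (f z - f y) \<le> C * norm (z - y)"
        using that N(2) lipschitz_onD[OF lip, of z y] by (auto simp: dist_real_def)
    qed auto
  qed simp
  have fA: "f ` A = f ` S \<union> f ` (A \<inter> N)" unfolding S_def by blast
  show "f ` A \<in> sets lebesgue"
    unfolding fA by (intro sets.Un fmeasurableD[OF fS(1)] null_setsD2[OF negl])
  have "emeasure lebesgue (f ` A) = emeasure lebesgue (f ` S)"
    unfolding fA by (intro emeasure_Un_null_set fmeasurableD[OF fS(1)] negl)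
  also have "\<dots> = (\<integral>\<^sup>+t. ennreal \<bar>D t\<bar> * indicator S t \<partial>lebesgue)"
    by (rule fS(2))
  also have "\<dots> = (\<integral>\<^sup>+t. ennreal \<bar>D t\<bar> * indicator A t \<partial>lebesgue)"
    using AE_not_in[OF N(1)]
    by (intro nn_integral_cong_AE, eventually_elim) (simp add: S_def indicator_def)
  finally show "emeasure lebesgue (f ` A) = (\<integral>\<^sup>+t. ennreal \<bar>D t\<bar> * indicator A t \<partial>lebesgue)" .
qed

section \<open>Estimates in L_p\<close>

lemma powr_add_le_weighted:
  fixes a b lam p :: real
  assumes a: "0 \<le> a" and b: "0 \<le> b" and lam: "0 < lam" "lam < 1" and p: "1 \<le> p"
  shows "(a + b) powr p \<le> lam powr (1 - p) * a powr p + (1 - lam) powr (1 - p) * b powr p"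
proof -
  have ge1: "1 \<le> y powr (1 - p)" if "0 < y" "y \<le> 1" for y :: real
    using powr_mono2'[of "1 - p" y 1] that p by simp
  consider "a = 0" | "b = 0" | "0 < a" "0 < b" using a b by linarith
  then show ?thesis
  proof cases
    case 1
    then show ?thesis using ge1[of "1 - lam"] lam mult_right_mono[of 1 _ "b powr p"] by simp
  next
    case 2
    then show ?thesis using ge1[of lam] lam mult_right_mono[of 1 _ "a powr p"] by simp
  next
    case 3
    have "(lam *\<^sub>R (a / lam) + (1 - lam) *\<^sub>R (b / (1 - lam))) powr p
          \<le> lam * (a / lam) powr p + (1 - lam) * (b / (1 - lam)) powr p"
      using convex_onD[OF powr_convex[OF p], of "1 - lam" "a / lam" "b / (1 - lam)"] lam 3
      by (simp add: algebra_simps)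
    then show ?thesis
      using lam a b by (simp add: powr_divide powr_diff)
  qed
qed

lemma ex_weight_powr_less_1:
  fixes c p :: real
  assumes "c < 1"
  shows "\<exists>lam. 0 < lam \<and> lam < 1 \<and> (1 - lam) powr (1 - p) * c < 1"
proof -
  have "isCont (\<lambda>lam. (1 - lam) powr (1 - p) * c) 0"
    by (intro continuous_intros) auto
  then have "((\<lambda>lam. (1 - lam) powr (1 - p) * c) \<longlongrightarrow> c) (at_right 0)"
    unfolding isCont_def by (auto intro: tendsto_mono[OF at_le])
  then have "\<forall>\<^sub>F lam in at_right 0. (1 - lam) powr (1 - p) * c < 1"
    using assms by (rule order_tendstoD(2))
  moreover have "\<forall>\<^sub>F lam in at_right (0::real). 0 < lam \<and> lam < 1"
    unfolding eventually_at_right[OF zero_less_one] by (intro exI[of _ 1]) auto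
  ultimately have "\<forall>\<^sub>F lam in at_right (0::real). 0 < lam \<and> lam < 1 \<and> (1 - lam) powr (1 - p) * c < 1"
    by eventually_elim blast
  then show ?thesis
    by (rule eventually_happens'[rotated]) simp
qed

text \<open>Without an essential bound the set in ess_norm_inf is empty and its Inf is unspecified.\<close>
lemma ess_norm_inf_nonneg:
  assumes "\<exists>B. AE t in lebesgue_on A. \<bar>f t\<bar> \<le> B"
  shows "0 \<le> ess_norm_inf A f"
proof -
  obtain B where "AE t in lebesgue_on A. \<bar>f t\<bar> \<le> B" using assms by blast
  then have "AE t in lebesgue_on A. \<bar>f t\<bar> \<le> max B 0"
    by eventually_elim simp
  then have "max B 0 \<in> {B. 0 \<le> B \<and> (AE t in lebesgue_on A. \<bar>f t\<bar> \<le> B)}"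
    by simp
  then show ?thesis unfolding ess_norm_inf_def by (intro cInf_greatest) blast+
qed

lemma AE_abs_le_ess_norm_inf:
  assumes "\<exists>B. AE t in lebesgue_on A. \<bar>f t\<bar> \<le> B"
  shows "AE t in lebesgue_on A. \<bar>f t\<bar> \<le> ess_norm_inf A f"
proof -
  let ?E = "{B. 0 \<le> B \<and> (AE t in lebesgue_on A. \<bar>f t\<bar> \<le> B)}"
  obtain B where "AE t in lebesgue_on A. \<bar>f t\<bar> \<le> B" using assms by blast
  then have "AE t in lebesgue_on A. \<bar>f t\<bar> \<le> max B 0"
    by eventually_elim simp
  then have ne: "max B 0 \<in> ?E" by simp
  have "AE t in lebesgue_on A. \<bar>f t\<bar> \<le> ess_norm_inf A f + 1 / Suc m" for m :: nat
  proof -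
    have "Inf ?E < ess_norm_inf A f + 1 / Suc m" unfolding ess_norm_inf_def by simp
    then obtain B' where "AE t in lebesgue_on A. \<bar>f t\<bar> \<le> B'" "B' < ess_norm_inf A f + 1 / Suc m"
      using cInf_lessD[of ?E] ne by blast
    then show ?thesis by (auto elim: eventually_mono)
  qed
  then have "AE t in lebesgue_on A. \<forall>m::nat. \<bar>f t\<bar> \<le> ess_norm_inf A f + 1 / Suc m"
    by (simp add: AE_all_countable)
  then show ?thesis
  proof eventually_elim
    case (elim t)
    show ?case
    proof (rule field_le_epsilon)
      fix e :: real assume "0 < e"
      then obtain m :: nat where "1 / Suc m < e" using nat_approx_posE by blast
      then show "\<bar>f t\<bar> \<le> ess_norm_inf A f + e" using elim[rule_format, of m] by linarith
    qed
  qed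
qed

lemma Lp_plus_nn_integral_finite:
  assumes "Lp_plus p A f"
  shows "(\<integral>\<^sup>+t. ennreal (\<bar>f t\<bar> powr p) \<partial>lebesgue_on A) < \<infinity>"
  using assms by (simp add: Lp_plus_def integrable_iff_bounded)

lemma Lp_plusI:
  assumes [measurable]: "f \<in> borel_measurable (lebesgue_on A)"
    and "AE t in lebesgue_on A. 0 \<le> f t"
    and "(\<integral>\<^sup>+t. ennreal (\<bar>f t\<bar> powr p) \<partial>lebesgue_on A) < \<infinity>"
  shows "Lp_plus p A f"
  using assms unfolding Lp_plus_def by (simp add: integrable_iff_bounded)

lemma d_p_eq_nn_integral:
  assumes [measurable]: "f \<in> borel_measurable (lebesgue_on A)" "g \<in> borel_measurable (lebesgue_on A)"
  shows "d_p p A f g = enn2real (\<integral>\<^sup>+t. ennreal (\<bar>f t - g t\<bar> powr p) \<partial>lebesgue_on A)"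
proof -
  have "(\<lambda>t. (max (f t) (g t) - min (f t) (g t)) powr p) = (\<lambda>t. \<bar>f t - g t\<bar> powr p)"
    by (auto simp: max_def min_def)
  then show ?thesis unfolding d_p_def by (simp add: integral_eq_nn_integral)
qed

lemma d_p_nonneg: "0 \<le> d_p p A f g"
  unfolding d_p_def by (rule integral_nonneg_AE) auto

lemma d_p_cong_AE:
  assumes [measurable]: "f \<in> borel_measurable (lebesgue_on A)" "g \<in> borel_measurable (lebesgue_on A)"
    "f' \<in> borel_measurable (lebesgue_on A)" "g' \<in> borel_measurable (lebesgue_on A)"
    and "AE t in lebesgue_on A. f t = f' t" "AE t in lebesgue_on A. g t = g' t"
  shows "d_p p A f g = d_p p A f' g'"
  unfolding d_p_def
proof (rule integral_cong_AE)
  show "AE t in lebesgue_on A. (max (f t) (g t) - min (f t) (g t)) powr p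
                             = (max (f' t) (g' t) - min (f' t) (g' t)) powr p"
    using assms(5,6) by eventually_elim simp
qed simp_all

lemma nn_integral_powr_diff_finite:
  assumes p: "1 \<le> p" and f: "Lp_plus p A f" and g: "Lp_plus p A g"
  shows "(\<integral>\<^sup>+t. ennreal (\<bar>f t - g t\<bar> powr p) \<partial>lebesgue_on A) < \<infinity>"
proof -
  have [measurable]: "f \<in> borel_measurable (lebesgue_on A)" "g \<in> borel_measurable (lebesgue_on A)"
    using f g by (simp_all add: Lp_plus_def)
  define w where "w = (1/2::real) powr (1 - p)"
  have "(\<integral>\<^sup>+t. ennreal (\<bar>f t - g t\<bar> powr p) \<partial>lebesgue_on A)
      \<le> (\<integral>\<^sup>+t. ennreal w * ennreal (\<bar>f t\<bar> powr p) + ennreal w * ennreal (\<bar>g t\<bar> powr p) \<partial>lebesgue_on A)"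
  proof (rule nn_integral_mono)
    fix t
    have "\<bar>f t - g t\<bar> powr p \<le> (\<bar>f t\<bar> + \<bar>g t\<bar>) powr p"
      using p by (intro powr_mono2) auto
    also have "\<dots> \<le> w * \<bar>f t\<bar> powr p + w * \<bar>g t\<bar> powr p"
      using powr_add_le_weighted[of "\<bar>f t\<bar>" "\<bar>g t\<bar>" "1/2" p] p by (simp add: w_def)
    finally have "ennreal (\<bar>f t - g t\<bar> powr p) \<le> ennreal (w * \<bar>f t\<bar> powr p + w * \<bar>g t\<bar> powr p)"
      by (rule ennreal_leI)
    then show "ennreal (\<bar>f t - g t\<bar> powr p) \<le> ennreal w * ennreal (\<bar>f t\<bar> powr p) + ennreal w * ennreal (\<bar>g t\<bar> powr p)"
      by (simp add: w_def ennreal_mult ennreal_plus)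
  qed
  also have "\<dots> = ennreal w * (\<integral>\<^sup>+t. ennreal (\<bar>f t\<bar> powr p) \<partial>lebesgue_on A) + ennreal w * (\<integral>\<^sup>+t. ennreal (\<bar>g t\<bar> powr p) \<partial>lebesgue_on A)"
    by (subst nn_integral_add) (auto simp: nn_integral_cmult)
  also have "\<dots> < \<infinity>"
    using Lp_plus_nn_integral_finite[OF f] Lp_plus_nn_integral_finite[OF g] by (simp add: ennreal_mult_less_top)
  finally show ?thesis .
qed

lemma AE_eq_if_d_p_eq_0:
  assumes p: "1 \<le> p" and f: "Lp_plus p A f" and g: "Lp_plus p A g" and d: "d_p p A f g = 0"
  shows "AE t in lebesgue_on A. f t = g t"
proof -
  have [measurable]: "f \<in> borel_measurable (lebesgue_on A)" "g \<in> borel_measurable (lebesgue_on A)"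
    using f g by (simp_all add: Lp_plus_def)
  have "(\<integral>\<^sup>+t. ennreal (\<bar>f t - g t\<bar> powr p) \<partial>lebesgue_on A) = 0"
    using d nn_integral_powr_diff_finite[OF p f g] by (auto simp: d_p_eq_nn_integral enn2real_eq_0_iff)
  then have "AE t in lebesgue_on A. ennreal (\<bar>f t - g t\<bar> powr p) = 0"
    by (subst (asm) nn_integral_0_iff_AE) auto
  then show ?thesis by eventually_elim simp
qed

lemma AE_eq_if_fixed_by_contraction:
  fixes T :: "(real \<Rightarrow> real) \<Rightarrow> real \<Rightarrow> real"
  assumes p: "1 \<le> p" and f: "Lp_plus p A f" and g: "Lp_plus p A g"
    and Tm: "T f \<in> borel_measurable (lebesgue_on A)" "T g \<in> borel_measurable (lebesgue_on A)"
    and contr: "d_p p A (T f) (T g) \<le> c * d_p p A f g" and c: "c < 1"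
    and ffix: "AE t in lebesgue_on A. T f t = f t" and gfix: "AE t in lebesgue_on A. T g t = g t"
  shows "AE t in lebesgue_on A. f t = g t"
proof (rule AE_eq_if_d_p_eq_0[OF p f g])
  have "d_p p A f g = d_p p A (T f) (T g)"
  proof (rule d_p_cong_AE)
    show "f \<in> borel_measurable (lebesgue_on A)" "g \<in> borel_measurable (lebesgue_on A)"
      using f g by (simp_all add: Lp_plus_def)
    show "AE t in lebesgue_on A. f t = T f t" "AE t in lebesgue_on A. g t = T g t"
      using ffix gfix by (auto elim: eventually_mono)
  qed (fact Tm)+
  also have "\<dots> \<le> c * d_p p A f g" by (rule contr)
  finally have "(1 - c) * d_p p A f g \<le> 0"
    by (simp add: algebra_simps)
  then show "d_p p A f g = 0"
    using c d_p_nonneg[of p A f g] by (auto simp: mult_le_0_iff)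
qed

section \<open>Change of variables on the pieces I_i\<close>

locale RB_maps =
  fixes n :: nat and x :: "nat \<Rightarrow> real" and l Dl :: "nat \<Rightarrow> real \<Rightarrow> real"
  assumes n_pos: "1 \<le> n"
    and x_less_Suc: "\<forall>i<n. x i < x (Suc i)"
    and l_homeomorphism: "\<forall>i\<in>{1..n}. \<exists>g. homeomorphism {x 0 .. x n} {x (i - 1) .. x i} (l i) g"
    and l_lipschitz: "\<forall>i\<in>{1..n}. \<exists>C. C-lipschitz_on {x 0 .. x n} (l i)"
    and l_ends: "\<forall>i\<in>{1..n}. l i (x 0) = x (i - 1) \<and> l i (x n) = x i"
    and l_deriv: "\<forall>i\<in>{1..n}. AE t in lebesgue_on {x 0 .. x n}.
                    (l i has_real_derivative Dl i t) (at t within {x 0 .. x n})"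
    and Dl_measurable: "\<forall>i\<in>{1..n}. Dl i \<in> borel_measurable (lebesgue_on {x 0 .. x n})"
begin

abbreviation "I \<equiv> {x 0 .. x n}"

definition "J i = {x (i - 1) .. x i}"

definition "l_inv i = the_inv_into I (l i)"

definition "piece t = Max {k\<in>{1..n}. x (k - 1) \<le> t}"

definition "back t = l_inv (piece t) t"

definition RB :: "(nat \<Rightarrow> real \<Rightarrow> real) \<Rightarrow> (nat \<Rightarrow> real \<Rightarrow> real) \<Rightarrow> (real \<Rightarrow> real) \<Rightarrow> real \<Rightarrow> real"
  where "RB q' S' g t = q' (piece t) (back t) + S' (piece t) (back t) * g (back t)"

lemma x_less: "i < j \<Longrightarrow> j \<le> n \<Longrightarrow> x i < x j"
proof (induction j)
  case (Suc j)
  then show ?case using x_less_Suc by (cases "i = j") (auto intro: less_trans)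
qed simp

lemma x_le: "i \<le> j \<Longrightarrow> j \<le> n \<Longrightarrow> x i \<le> x j"
  using x_less by (cases "i = j") (auto intro: less_imp_le)

lemma subint_subset_J: "subint x n k \<subseteq> J k"
  by (auto simp: subint_def J_def)

lemma J_subset_I: "k \<in> {1..n} \<Longrightarrow> J k \<subseteq> I"
  using x_le[of 0 "k - 1"] x_le[of k n] by (auto simp: J_def)

lemma subint_subset_I: "k \<in> {1..n} \<Longrightarrow> subint x n k \<subseteq> I"
  using subint_subset_J J_subset_I by blast

lemma piece_mem:
  assumes t: "t \<in> I"
  shows "piece t \<in> {1..n}" "t \<in> subint x n (piece t)"
proof -
  let ?A = "{k\<in>{1..n}. x (k - 1) \<le> t}"
  have "1 \<in> ?A" using n_pos t by auto
  then have A: "piece t \<in> ?A" unfolding piece_def by (intro Max_in) auto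
  then show "piece t \<in> {1..n}" by simp
  have "t < x (piece t)" if "piece t \<noteq> n"
  proof (rule ccontr)
    assume "\<not> t < x (piece t)"
    then have "Suc (piece t) \<in> ?A" using A that by auto
    then have "Suc (piece t) \<le> Max ?A" by (intro Max_ge) auto
    then show False by (simp add: piece_def)
  qed
  then show "t \<in> subint x n (piece t)" using A t by (auto simp: subint_def)
qed

lemma piece_eqI:
  assumes k: "k \<in> {1..n}" and t: "t \<in> subint x n k"
  shows "piece t = k"
  unfolding piece_def
proof (rule Max_eqI)
  show "k \<in> {k\<in>{1..n}. x (k - 1) \<le> t}" using k t by (auto simp: subint_def split: if_splits)
  show "j \<le> k" if "j \<in> {k\<in>{1..n}. x (k - 1) \<le> t}" for j
  proof (rule ccontr)
    assume "\<not> j \<le> k"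
    then have "k < n" "x k \<le> x (j - 1)" using that x_le[of k "j - 1"] by auto
    moreover have "t < x k" using t \<open>k < n\<close> by (auto simp: subint_def)
    ultimately show False using that by auto
  qed
qed simp

lemma piece_eq_iff: "t \<in> I \<Longrightarrow> k \<in> {1..n} \<Longrightarrow> piece t = k \<longleftrightarrow> t \<in> subint x n k"
  using piece_mem piece_eqI by blast

lemma l_bij_betw:
  assumes i: "i \<in> {1..n}"
  shows "l i ` I = J i" "inj_on (l i) I"
proof -
  obtain g where "homeomorphism I (J i) (l i) g" using l_homeomorphism i unfolding J_def by blast
  then show "l i ` I = J i" "inj_on (l i) I"
    by (auto simp: homeomorphism_def intro: inj_on_inverseI)
qed

lemma l_inv_mem: "i \<in> {1..n} \<Longrightarrow> t \<in> J i \<Longrightarrow> l_inv i t \<in> I"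
  unfolding l_inv_def using l_bij_betw by (metis the_inv_into_into subset_refl)

lemma l_l_inv: "i \<in> {1..n} \<Longrightarrow> t \<in> J i \<Longrightarrow> l i (l_inv i t) = t"
  unfolding l_inv_def using l_bij_betw by (metis f_the_inv_into_f)

lemma l_inv_l: "i \<in> {1..n} \<Longrightarrow> u \<in> I \<Longrightarrow> l_inv i (l i u) = u"
  unfolding l_inv_def using l_bij_betw by (metis the_inv_into_f_f)

lemma back_mem: "t \<in> I \<Longrightarrow> back t \<in> I"
  using piece_mem subint_subset_J l_inv_mem unfolding back_def by blast

lemma l_back: "t \<in> I \<Longrightarrow> l (piece t) (back t) = t"
  using piece_mem subint_subset_J l_l_inv unfolding back_def by blast

lemma RB_op_eq_RB:
  assumes t: "t \<in> I"
  shows "RB_op x n l q' S' g t = RB q' S' g t"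
proof -
  have ind: "indicator (subint x n k) t = (if k = piece t then 1 else 0 :: real)" if "k \<in> {1..n}" for k
    using piece_eq_iff[OF t that] by (auto simp: indicator_def)
  have "RB_op x n l q' S' g t
      = (\<Sum>k=1..n. if k = piece t then q' k (l_inv k t) else 0)
      + (\<Sum>k=1..n. if k = piece t then S' k (l_inv k t) * g (l_inv k t) else 0)"
    unfolding RB_op_def l_inv_def by (intro arg_cong2[where f = "(+)"] sum.cong) (auto simp: ind)
  then show ?thesis
    using piece_mem(1)[OF t] by (simp add: sum.delta' RB_def back_def)
qed

lemma l_image_lebesgue:
  assumes i: "i \<in> {1..n}" and A: "A \<in> sets lebesgue" "A \<subseteq> I"
  shows "l i ` A \<in> sets lebesgue"
    "emeasure lebesgue (l i ` A) = (\<integral>\<^sup>+t. ennreal \<bar>Dl i t\<bar> * indicator A t \<partial>lebesgue)"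
proof -
  obtain C where C: "C-lipschitz_on I (l i)" using l_lipschitz i by blast
  have der: "AE t in lebesgue_on I. (l i has_real_derivative Dl i t) (at t within I)"
    using l_deriv i by blast
  show "l i ` A \<in> sets lebesgue"
    "emeasure lebesgue (l i ` A) = (\<integral>\<^sup>+t. ennreal \<bar>Dl i t\<bar> * indicator A t \<partial>lebesgue)"
    using emeasure_lipschitz_inj_image[OF C l_bij_betw(2)[OF i] compact_Icc der A] by auto
qed

lemma l_inv_vimage:
  assumes i: "i \<in> {1..n}" and A: "A \<subseteq> I"
  shows "l_inv i -` A \<inter> J i = l i ` A"
proof (intro equalityI subsetI)
  fix t assume "t \<in> l_inv i -` A \<inter> J i"
  then show "t \<in> l i ` A" using l_l_inv[OF i] by (metis IntE image_eqI vimageE)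
next
  fix t assume "t \<in> l i ` A"
  then obtain u where "u \<in> A" "t = l i u" by blast
  then show "t \<in> l_inv i -` A \<inter> J i" using A l_inv_l[OF i] l_bij_betw(1)[OF i] by auto
qed

lemma measurable_l_inv:
  assumes i: "i \<in> {1..n}"
  shows "l_inv i \<in> measurable (lebesgue_on (J i)) (lebesgue_on I)"
proof (rule measurableI)
  show "l_inv i t \<in> space (lebesgue_on I)" if "t \<in> space (lebesgue_on (J i))" for t
    using that l_inv_mem[OF i] by (simp add: J_def)
  fix A assume "A \<in> sets (lebesgue_on I)"
  then have A: "A \<subseteq> I" "A \<in> sets lebesgue" by (auto simp: sets_restrict_space_iff)
  then show "l_inv i -` A \<inter> space (lebesgue_on (J i)) \<in> sets (lebesgue_on (J i))"
    using l_inv_vimage[OF i A(1)] l_image_lebesgue(1)[OF i A(2,1)] l_bij_betw(1)[OF i]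
    by (auto simp: sets_restrict_space_iff J_def)
qed

lemma distr_l_inv:
  assumes i: "i \<in> {1..n}"
  shows "distr (lebesgue_on (J i)) (lebesgue_on I) (l_inv i) = density (lebesgue_on I) (\<lambda>u. ennreal \<bar>Dl i u\<bar>)"
proof (rule measure_eqI)
  have [measurable]: "Dl i \<in> borel_measurable (lebesgue_on I)" using Dl_measurable i by blast
  fix A assume "A \<in> sets (distr (lebesgue_on (J i)) (lebesgue_on I) (l_inv i))"
  then have AI: "A \<in> sets (lebesgue_on I)" by simp
  then have A: "A \<subseteq> I" "A \<in> sets lebesgue" by (auto simp: sets_restrict_space_iff)
  have "emeasure (distr (lebesgue_on (J i)) (lebesgue_on I) (l_inv i)) A = emeasure (lebesgue_on (J i)) (l i ` A)"
    using emeasure_distr[OF measurable_l_inv[OF i] AI] l_inv_vimage[OF i A(1)] by simp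
  also have "\<dots> = emeasure lebesgue (l i ` A)"
    using l_bij_betw(1)[OF i] A(1) by (intro emeasure_restrict_space) (auto simp: J_def)
  also have "\<dots> = (\<integral>\<^sup>+t. ennreal \<bar>Dl i t\<bar> * indicator A t \<partial>lebesgue)"
    by (rule l_image_lebesgue(2)[OF i A(2,1)])
  also have "\<dots> = (\<integral>\<^sup>+t. ennreal \<bar>Dl i t\<bar> * indicator A t \<partial>lebesgue_on I)"
    using A(1) by (subst nn_integral_restrict_space) (auto intro!: nn_integral_cong simp: indicator_def)
  also have "\<dots> = emeasure (density (lebesgue_on I) (\<lambda>u. ennreal \<bar>Dl i u\<bar>)) A"
    using AI by (subst emeasure_density) auto
  finally show "emeasure (distr (lebesgue_on (J i)) (lebesgue_on I) (l_inv i)) A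
      = emeasure (density (lebesgue_on I) (\<lambda>u. ennreal \<bar>Dl i u\<bar>)) A" .
qed simp

lemma nn_integral_l_inv:
  assumes i: "i \<in> {1..n}" and \<psi>: "\<psi> \<in> borel_measurable (lebesgue_on I)"
  shows "(\<integral>\<^sup>+t. \<psi> (l_inv i t) \<partial>lebesgue_on (J i)) = (\<integral>\<^sup>+u. ennreal \<bar>Dl i u\<bar> * \<psi> u \<partial>lebesgue_on I)"
proof -
  have [measurable]: "Dl i \<in> borel_measurable (lebesgue_on I)" using Dl_measurable i by blast
  have "(\<integral>\<^sup>+t. \<psi> (l_inv i t) \<partial>lebesgue_on (J i)) = integral\<^sup>N (distr (lebesgue_on (J i)) (lebesgue_on I) (l_inv i)) \<psi>"
    using \<psi> by (subst nn_integral_distr[OF measurable_l_inv[OF i]]) auto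
  also have "\<dots> = (\<integral>\<^sup>+u. ennreal \<bar>Dl i u\<bar> * \<psi> u \<partial>lebesgue_on I)"
    unfolding distr_l_inv[OF i] using \<psi> by (subst nn_integral_density) auto
  finally show ?thesis .
qed

lemma measurable_piece: "piece \<in> measurable (lebesgue_on I) (count_space {1..n})"
proof (subst measurable_count_space_eq2_countable, intro conjI ballI)
  show "piece \<in> space (lebesgue_on I) \<rightarrow> {1..n}" using piece_mem(1) by auto
  fix k assume k: "k \<in> {1..n}"
  have "piece -` {k} \<inter> space (lebesgue_on I) = subint x n k"
  proof (intro equalityI subsetI)
    fix t assume "t \<in> piece -` {k} \<inter> space (lebesgue_on I)"
    then have "t \<in> I" "piece t = k" by auto
    then show "t \<in> subint x n k" using piece_mem(2)[of t] by simp
  next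
    fix t assume "t \<in> subint x n k"
    then show "t \<in> piece -` {k} \<inter> space (lebesgue_on I)"
      using subint_subset_I[OF k] piece_eqI[OF k] by auto
  qed
  then show "piece -` {k} \<inter> space (lebesgue_on I) \<in> sets (lebesgue_on I)"
    using subint_subset_I[OF k] by (simp add: sets_restrict_space_iff subint_def)
qed

lemma measurable_back: "back \<in> measurable (lebesgue_on I) (lebesgue_on I)"
proof (rule measurable_piecewise_restrict[of "subint x n ` {1..n}"])
  show "space (lebesgue_on I) \<subseteq> \<Union>(subint x n ` {1..n})" using piece_mem by fastforce
  fix \<Omega> assume "\<Omega> \<in> subint x n ` {1..n}"
  then obtain k where k: "k \<in> {1..n}" and \<Omega>: "\<Omega> = subint x n k" by blast
  have sub: "subint x n k \<subseteq> I" by (rule subint_subset_I[OF k])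
  show "\<Omega> \<inter> space (lebesgue_on I) \<in> sets (lebesgue_on I)"
    using sub by (simp add: \<Omega> sets_restrict_space_iff subint_def)
  have "restrict_space (lebesgue_on I) (subint x n k) = lebesgue_on (subint x n k)"
    using sub by (subst restrict_restrict_space) (auto simp: subint_def Int_absorb1)
  moreover have "l_inv k \<in> measurable (lebesgue_on (subint x n k)) (lebesgue_on I)"
    using measurable_restrict_mono[OF measurable_l_inv[OF k] subint_subset_J] .
  ultimately have "l_inv k \<in> measurable (restrict_space (lebesgue_on I) (subint x n k)) (lebesgue_on I)"
    by simp
  then show "back \<in> measurable (restrict_space (lebesgue_on I) \<Omega>) (lebesgue_on I)"
    unfolding \<Omega> by (rule measurable_cong[THEN iffD1, rotated])
      (auto simp: back_def piece_eqI[OF k] space_restrict_space)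
qed simp

lemma measurable_piecewise:
  assumes "\<And>k. k \<in> {1..n} \<Longrightarrow> \<phi> k \<in> measurable (lebesgue_on I) N"
  shows "(\<lambda>t. \<phi> (piece t) (back t)) \<in> measurable (lebesgue_on I) N"
proof (rule measurable_compose_countable'[OF _ measurable_piece])
  fix k assume "k \<in> {1..n}"
  then show "(\<lambda>t. \<phi> k (back t)) \<in> measurable (lebesgue_on I) N"
    using measurable_compose[OF measurable_back assms] by simp
qed simp

lemma nn_integral_piece:
  assumes k: "k \<in> {1..n}" and \<psi>: "\<psi> \<in> borel_measurable (lebesgue_on I)"
  shows "(\<integral>\<^sup>+t. \<psi> (back t) * indicator (subint x n k) t \<partial>lebesgue_on I)
    = (\<integral>\<^sup>+u. ennreal \<bar>Dl k u\<bar> * \<psi> u \<partial>lebesgue_on I)"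
proof -
  have "(\<integral>\<^sup>+t. \<psi> (back t) * indicator (subint x n k) t \<partial>lebesgue_on I)
      = (\<integral>\<^sup>+t. \<psi> (l_inv k t) * indicator (subint x n k) t \<partial>lebesgue)"
    using subint_subset_I[OF k]
    by (subst nn_integral_restrict_space) (auto intro!: nn_integral_cong simp: indicator_def back_def piece_eqI[OF k])
  also have "\<dots> = (\<integral>\<^sup>+t. \<psi> (l_inv k t) * indicator (J k) t \<partial>lebesgue)"
  proof (rule nn_integral_cong_AE)
    have "{x k} \<in> null_sets lebesgue" by simp
    from AE_not_in[OF this]
    show "AE t in lebesgue. \<psi> (l_inv k t) * indicator (subint x n k) t = \<psi> (l_inv k t) * indicator (J k) t"
      by eventually_elim (auto simp: subint_def J_def indicator_def)
  qed
  also have "\<dots> = (\<integral>\<^sup>+t. \<psi> (l_inv k t) \<partial>lebesgue_on (J k))"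
    by (simp add: nn_integral_restrict_space J_def)
  also have "\<dots> = (\<integral>\<^sup>+u. ennreal \<bar>Dl k u\<bar> * \<psi> u \<partial>lebesgue_on I)"
    by (rule nn_integral_l_inv[OF k \<psi>])
  finally show ?thesis .
qed

lemma nn_integral_piecewise:
  fixes \<psi> :: "nat \<Rightarrow> real \<Rightarrow> ennreal"
  assumes \<psi>: "\<And>k. k \<in> {1..n} \<Longrightarrow> \<psi> k \<in> borel_measurable (lebesgue_on I)"
  shows "(\<integral>\<^sup>+t. \<psi> (piece t) (back t) \<partial>lebesgue_on I) = (\<Sum>k=1..n. \<integral>\<^sup>+u. ennreal \<bar>Dl k u\<bar> * \<psi> k u \<partial>lebesgue_on I)"
proof -
  have "(\<integral>\<^sup>+t. \<psi> (piece t) (back t) \<partial>lebesgue_on I)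
      = (\<integral>\<^sup>+t. (\<Sum>k=1..n. \<psi> k (back t) * indicator (subint x n k) t) \<partial>lebesgue_on I)"
  proof (rule nn_integral_cong)
    fix t assume "t \<in> space (lebesgue_on I)"
    then have "t \<in> I" by simp
    then have "indicator (subint x n k) t = (if k = piece t then 1 else 0 :: ennreal)" if "k \<in> {1..n}" for k
      using piece_eq_iff[OF _ that] by (auto simp: indicator_def)
    then have "(\<Sum>k=1..n. \<psi> k (back t) * indicator (subint x n k) t)
        = (\<Sum>k=1..n. if k = piece t then \<psi> k (back t) else 0)"
      by (intro sum.cong) simp_all
    then show "\<psi> (piece t) (back t) = (\<Sum>k=1..n. \<psi> k (back t) * indicator (subint x n k) t)"
      using piece_mem(1)[OF \<open>t \<in> I\<close>] by (simp add: sum.delta')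
  qed
  also have "\<dots> = (\<Sum>k=1..n. \<integral>\<^sup>+t. \<psi> k (back t) * indicator (subint x n k) t \<partial>lebesgue_on I)"
  proof (rule nn_integral_sum)
    fix k assume k: "k \<in> {1..n}"
    have "subint x n k \<in> sets (lebesgue_on I)"
      using subint_subset_I[OF k] by (simp add: sets_restrict_space_iff subint_def)
    then show "(\<lambda>t. \<psi> k (back t) * indicator (subint x n k) t) \<in> borel_measurable (lebesgue_on I)"
      using measurable_compose[OF measurable_back \<psi>[OF k]] by measurable
  qed
  also have "\<dots> = (\<Sum>k=1..n. \<integral>\<^sup>+u. ennreal \<bar>Dl k u\<bar> * \<psi> k u \<partial>lebesgue_on I)"
    using nn_integral_piece \<psi> by simp
  finally show ?thesis .
qed

lemma AE_piecewise:
  assumes P: "\<And>k. k \<in> {1..n} \<Longrightarrow> AE u in lebesgue_on I. P k u"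
  shows "AE t in lebesgue_on I. P (piece t) (back t)"
proof -
  have "\<forall>k\<in>{1..n}. \<exists>N. N \<in> null_sets (lebesgue_on I) \<and> (\<forall>u\<in>I - N. P k u)"
  proof
    fix k assume "k \<in> {1..n}"
    then obtain N where "\<And>u. u \<in> space (lebesgue_on I) - N \<Longrightarrow> P k u" "N \<in> null_sets (lebesgue_on I)"
      using AE_E3[OF P] by blast
    then show "\<exists>N. N \<in> null_sets (lebesgue_on I) \<and> (\<forall>u\<in>I - N. P k u)" by auto
  qed
  from bchoice[OF this] obtain N where N: "\<And>k. k \<in> {1..n} \<Longrightarrow> N k \<in> null_sets (lebesgue_on I)"
    and P_N: "\<And>k u. k \<in> {1..n} \<Longrightarrow> u \<in> I - N k \<Longrightarrow> P k u"
    by blast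
  have N_meas: "(\<lambda>u. indicator (N k) u :: ennreal) \<in> borel_measurable (lebesgue_on I)" if "k \<in> {1..n}" for k
    using N[OF that] by (intro borel_measurable_indicator) auto
  have "(\<integral>\<^sup>+t. indicator (N (piece t)) (back t) \<partial>lebesgue_on I)
      = (\<Sum>k=1..n. \<integral>\<^sup>+u. ennreal \<bar>Dl k u\<bar> * indicator (N k) u \<partial>lebesgue_on I)"
    by (rule nn_integral_piecewise) (rule N_meas)
  also have "\<dots> = 0"
  proof (intro sum.neutral ballI)
    fix k assume k: "k \<in> {1..n}"
    from AE_not_in[OF N[OF k]] have "AE u in lebesgue_on I. ennreal \<bar>Dl k u\<bar> * indicator (N k) u = 0"
      by eventually_elim simp
    then have "(\<integral>\<^sup>+u. ennreal \<bar>Dl k u\<bar> * indicator (N k) u \<partial>lebesgue_on I) = (\<integral>\<^sup>+u. 0 \<partial>lebesgue_on I)"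
      by (rule nn_integral_cong_AE)
    then show "(\<integral>\<^sup>+u. ennreal \<bar>Dl k u\<bar> * indicator (N k) u \<partial>lebesgue_on I) = 0"
      by simp
  qed
  finally have "AE t in lebesgue_on I. indicator (N (piece t)) (back t) = (0::ennreal)"
    by (subst (asm) nn_integral_0_iff_AE) (auto intro: measurable_piecewise N_meas)
  then show ?thesis
  proof (rule AE_mp, intro AE_I2 impI)
    fix t assume "t \<in> space (lebesgue_on I)" "indicator (N (piece t)) (back t) = (0::ennreal)"
    then show "P (piece t) (back t)"
      using P_N[of "piece t" "back t"] piece_mem(1) back_mem by (auto simp: indicator_def split: if_splits)
  qed
qed

lemma measurable_RB:
  assumes "\<And>k. k \<in> {1..n} \<Longrightarrow> q' k \<in> borel_measurable (lebesgue_on I)"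
    and "\<And>k. k \<in> {1..n} \<Longrightarrow> S' k \<in> borel_measurable (lebesgue_on I)"
    and "g \<in> borel_measurable (lebesgue_on I)"
  shows "RB q' S' g \<in> borel_measurable (lebesgue_on I)"
proof -
  have "(\<lambda>t. (\<lambda>k u. q' k u + S' k u * g u) (piece t) (back t)) \<in> borel_measurable (lebesgue_on I)"
  proof (rule measurable_piecewise)
    fix k assume "k \<in> {1..n}"
    note [measurable] = assms(1,2)[OF this] assms(3)
    show "(\<lambda>u. q' k u + S' k u * g u) \<in> borel_measurable (lebesgue_on I)"
      by measurable
  qed
  then show ?thesis by (simp add: RB_def[abs_def])
qed

lemma measurable_RB_op:
  assumes "\<And>k. k \<in> {1..n} \<Longrightarrow> q' k \<in> borel_measurable (lebesgue_on I)"
    and "\<And>k. k \<in> {1..n} \<Longrightarrow> S' k \<in> borel_measurable (lebesgue_on I)"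
    and "g \<in> borel_measurable (lebesgue_on I)"
  shows "RB_op x n l q' S' g \<in> borel_measurable (lebesgue_on I)"
  using measurable_RB[OF assms] by (subst measurable_cong[where g = "RB q' S' g"]) (auto simp: RB_op_eq_RB)

section \<open>Fixed points with invariant graphs\<close>

lemma RB_fixed_node_eq_0:
  assumes vanish: "\<forall>k\<in>{1..n}. q' k (x 0) = 0 \<and> S' k (x 0) = 0"
    and fixed: "\<forall>t\<in>I. \<phi> t = RB q' S' \<phi> t" and i: "i < n"
  shows "\<phi> (x i) = 0"
proof -
  have k: "Suc i \<in> {1..n}" using i by auto
  have "x i \<in> subint x n (Suc i)"
    using x_less[of i "Suc i"] i by (auto simp: subint_def)
  then have piece: "piece (x i) = Suc i" and "x i \<in> I"
    using piece_eqI[OF k] subint_subset_I[OF k] by auto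
  have "l (Suc i) (x 0) = x i" using l_ends k by auto
  then have "back (x i) = x 0"
    using l_inv_l[OF k, of "x 0"] x_le[of 0 n] by (simp add: back_def piece)
  then show ?thesis using fixed \<open>x i \<in> I\<close> vanish k by (simp add: RB_def piece)
qed

text \<open>At u = x_n the point l_i(u) = x_i belongs to I_{i+1} rather than I_i; there both sides
  vanish because of the assumption at the endpoints.\<close>
lemma RB_fixed_l_eq:
  assumes vanish: "\<forall>k\<in>{1..n}. q' k (x 0) = 0 \<and> S' k (x 0) = 0 \<and> q' k (x n) = 0 \<and> S' k (x n) = 0"
    and fixed: "\<forall>t\<in>I. \<phi> t = RB q' S' \<phi> t" and i: "i \<in> {1..n}" and u: "u \<in> I"
  shows "\<phi> (l i u) = q' i u + S' i u * \<phi> u"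
proof (cases "piece (l i u) = i")
  case True
  have "l i u \<in> I" using l_bij_betw(1)[OF i] J_subset_I[OF i] u by blast
  then show ?thesis using fixed True l_inv_l[OF i u] by (simp add: RB_def back_def)
next
  case False
  have J: "l i u \<in> J i" using l_bij_betw(1)[OF i] u by blast
  then have "l i u \<notin> subint x n i" using False piece_eqI[OF i] by blast
  then have "i < n" and lu: "l i u = x i" using J i by (auto simp: subint_def J_def split: if_splits)
  moreover have "u = x n"
    using lu l_ends i u x_le[of 0 n] inj_onD[OF l_bij_betw(2)[OF i], of u "x n"] by auto
  ultimately show ?thesis
    using RB_fixed_node_eq_0[of q' S' \<phi> i] vanish fixed i by auto
qed

lemma graph_on_eq_Union_ifs_map:
  assumes vanish: "\<forall>k\<in>{1..n}. q' k (x 0) = 0 \<and> S' k (x 0) = 0 \<and> q' k (x n) = 0 \<and> S' k (x n) = 0"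
    and fixed: "\<forall>t\<in>I. \<phi> t = RB q' S' \<phi> t"
  shows "graph_on I \<phi> = (\<Union>i\<in>{1..n}. ifs_map (l i) (q' i) (S' i) ` graph_on I \<phi>)"
proof (intro equalityI subsetI)
  fix z assume "z \<in> graph_on I \<phi>"
  then obtain t where t: "t \<in> I" and z: "z = (t, \<phi> t)" unfolding graph_on_def by blast
  have "z = ifs_map (l (piece t)) (q' (piece t)) (S' (piece t)) (back t, \<phi> (back t))"
    using z l_back[OF t] fixed t by (simp add: ifs_map_def RB_def)
  moreover have "(back t, \<phi> (back t)) \<in> graph_on I \<phi>" using back_mem[OF t] by (simp add: graph_on_def)
  ultimately show "z \<in> (\<Union>i\<in>{1..n}. ifs_map (l i) (q' i) (S' i) ` graph_on I \<phi>)"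
    using piece_mem(1)[OF t] by blast
next
  fix z assume "z \<in> (\<Union>i\<in>{1..n}. ifs_map (l i) (q' i) (S' i) ` graph_on I \<phi>)"
  then obtain i u where i: "i \<in> {1..n}" and u: "u \<in> I"
    and z: "z = ifs_map (l i) (q' i) (S' i) (u, \<phi> u)" by (auto simp: graph_on_def)
  have "l i u \<in> I" using l_bij_betw(1)[OF i] J_subset_I[OF i] u by blast
  then show "z \<in> graph_on I \<phi>"
    using z RB_fixed_l_eq[OF vanish fixed i u] by (auto simp: graph_on_def ifs_map_def)
qed

lemma RB_fixed_if_graph_on_eq:
  assumes "graph_on I \<phi> = (\<Union>i\<in>{1..n}. ifs_map (l i) (q' i) (S' i) ` graph_on I \<phi>)"
  shows "\<forall>t\<in>I. \<phi> t = RB q' S' \<phi> t"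
proof
  fix t assume t: "t \<in> I"
  have "(back t, \<phi> (back t)) \<in> graph_on I \<phi>" using back_mem[OF t] by (simp add: graph_on_def)
  then have "ifs_map (l (piece t)) (q' (piece t)) (S' (piece t)) (back t, \<phi> (back t)) \<in> graph_on I \<phi>"
    using piece_mem(1)[OF t] assms by blast
  then have "(t, RB q' S' \<phi> t) \<in> graph_on I \<phi>"
    using l_back[OF t] by (simp add: ifs_map_def RB_def)
  then show "\<phi> t = RB q' S' \<phi> t" unfolding graph_on_def by auto
qed

end

section \<open>Contraction and fixed point by monotone iteration\<close>

locale RB_setting = RB_maps +
  fixes p :: real and q S :: "nat \<Rightarrow> real \<Rightarrow> real"
  assumes p: "1 \<le> p"
    and Dl_bounded: "\<forall>i\<in>{1..n}. \<exists>B. AE t in lebesgue_on {x 0 .. x n}. \<bar>Dl i t\<bar> \<le> B"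
    and q_Lp_plus: "\<forall>i\<in>{1..n}. Lp_plus p {x 0 .. x n} (q i)"
    and S_Linf_plus: "\<forall>i\<in>{1..n}. Linf_plus {x 0 .. x n} (S i)"
    and small: "(\<Sum>i=1..n. ess_norm_inf {x 0 .. x n} (\<lambda>t. Dl i t * S i t powr p)) < 1"
begin

definition "contraction_factor = (\<Sum>i=1..n. ess_norm_inf I (\<lambda>t. Dl i t * S i t powr p))"

definition "representatives q' S' \<longleftrightarrow>
  (\<forall>k\<in>{1..n}. q' k \<in> borel_measurable (lebesgue_on I) \<and> S' k \<in> borel_measurable (lebesgue_on I)
     \<and> (AE u in lebesgue_on I. q' k u = q k u) \<and> (AE u in lebesgue_on I. S' k u = S k u))"

definition "offset_norm q' = (\<integral>\<^sup>+t. ennreal (\<bar>q' (piece t) (back t)\<bar> powr p) \<partial>lebesgue_on I)"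

lemma representativesD:
  assumes "representatives q' S'" "k \<in> {1..n}"
  shows "q' k \<in> borel_measurable (lebesgue_on I)" "S' k \<in> borel_measurable (lebesgue_on I)"
    "AE u in lebesgue_on I. q' k u = q k u" "AE u in lebesgue_on I. S' k u = S k u"
  using assms unfolding representatives_def by auto

lemma representatives_q_S: "representatives q S"
  using q_Lp_plus S_Linf_plus by (auto simp: representatives_def Lp_plus_def Linf_plus_def)

lemma q_nonneg_AE: "k \<in> {1..n} \<Longrightarrow> AE u in lebesgue_on I. 0 \<le> q k u"
  using q_Lp_plus by (auto simp: Lp_plus_def)

lemma S_nonneg_AE: "k \<in> {1..n} \<Longrightarrow> AE u in lebesgue_on I. 0 \<le> S k u"
  using S_Linf_plus by (auto simp: Linf_plus_def)

lemma Dl_S_powr_bounded: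
  assumes k: "k \<in> {1..n}"
  shows "\<exists>B. AE t in lebesgue_on I. \<bar>Dl k t * S k t powr p\<bar> \<le> B"
proof -
  obtain B1 where B1: "AE u in lebesgue_on I. \<bar>Dl k u\<bar> \<le> B1" using Dl_bounded k by blast
  have "\<exists>B. AE u in lebesgue_on I. \<bar>S k u\<bar> \<le> B" using S_Linf_plus k by (simp add: Linf_plus_def)
  then obtain B2 where B2: "AE u in lebesgue_on I. \<bar>S k u\<bar> \<le> B2" by blast
  have "AE t in lebesgue_on I. \<bar>Dl k t * S k t powr p\<bar> \<le> B1 * B2 powr p"
    using B1 B2 S_nonneg_AE[OF k]
  proof eventually_elim
    case (elim t)
    have "S k t powr p \<le> B2 powr p" using elim p by (intro powr_mono2) auto
    then show ?case using elim by (simp add: abs_mult mult_mono)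
  qed
  then show ?thesis by blast
qed

lemma contraction_factor_nonneg: "0 \<le> contraction_factor"
  unfolding contraction_factor_def by (intro sum_nonneg ess_norm_inf_nonneg Dl_S_powr_bounded)

lemma contraction_factor_less_1: "contraction_factor < 1"
  using small unfolding contraction_factor_def .

lemma AE_Dl_S_powr_le:
  assumes k: "k \<in> {1..n}"
  shows "AE u in lebesgue_on I. \<bar>Dl k u\<bar> * \<bar>S k u\<bar> powr p \<le> ess_norm_inf I (\<lambda>t. Dl k t * S k t powr p)"
  using AE_abs_le_ess_norm_inf[OF Dl_S_powr_bounded[OF k]] S_nonneg_AE[OF k]
  by eventually_elim (simp add: abs_mult)

lemma nn_integral_linear_part_le:
  assumes qS: "representatives q' S'" and f: "f \<in> borel_measurable (lebesgue_on I)"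
  shows "(\<integral>\<^sup>+t. ennreal (\<bar>S' (piece t) (back t) * f (back t)\<bar> powr p) \<partial>lebesgue_on I)
     \<le> ennreal contraction_factor * (\<integral>\<^sup>+u. ennreal (\<bar>f u\<bar> powr p) \<partial>lebesgue_on I)"
proof -
  let ?c = "\<lambda>k. ess_norm_inf I (\<lambda>t. Dl k t * S k t powr p)"
  have "(\<integral>\<^sup>+t. ennreal (\<bar>S' (piece t) (back t) * f (back t)\<bar> powr p) \<partial>lebesgue_on I)
     = (\<Sum>k=1..n. \<integral>\<^sup>+u. ennreal \<bar>Dl k u\<bar> * ennreal (\<bar>S' k u * f u\<bar> powr p) \<partial>lebesgue_on I)"
  proof (rule nn_integral_piecewise[of "\<lambda>k u. ennreal (\<bar>S' k u * f u\<bar> powr p)"])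
    fix k assume "k \<in> {1..n}"
    note [measurable] = representativesD(2)[OF qS this] f
    show "(\<lambda>u. ennreal (\<bar>S' k u * f u\<bar> powr p)) \<in> borel_measurable (lebesgue_on I)" by measurable
  qed
  also have "\<dots> \<le> (\<Sum>k=1..n. ennreal (?c k) * \<integral>\<^sup>+u. ennreal (\<bar>f u\<bar> powr p) \<partial>lebesgue_on I)"
  proof (rule sum_mono)
    fix k assume k: "k \<in> {1..n}"
    have "(\<integral>\<^sup>+u. ennreal \<bar>Dl k u\<bar> * ennreal (\<bar>S' k u * f u\<bar> powr p) \<partial>lebesgue_on I)
        \<le> (\<integral>\<^sup>+u. ennreal (?c k) * ennreal (\<bar>f u\<bar> powr p) \<partial>lebesgue_on I)"
    proof (rule nn_integral_mono_AE)
      show "AE u in lebesgue_on I. ennreal \<bar>Dl k u\<bar> * ennreal (\<bar>S' k u * f u\<bar> powr p)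
          \<le> ennreal (?c k) * ennreal (\<bar>f u\<bar> powr p)"
        using AE_Dl_S_powr_le[OF k] representativesD(4)[OF qS k]
      proof eventually_elim
        case (elim u)
        then have "\<bar>Dl k u\<bar> * (\<bar>S' k u\<bar> powr p * \<bar>f u\<bar> powr p) \<le> ?c k * \<bar>f u\<bar> powr p"
          by (simp add: mult.assoc[symmetric] mult_right_mono)
        then have "ennreal (\<bar>Dl k u\<bar> * \<bar>S' k u * f u\<bar> powr p) \<le> ennreal (?c k * \<bar>f u\<bar> powr p)"
          by (intro ennreal_leI) (simp add: abs_mult powr_mult)
        then show ?case
          using ess_norm_inf_nonneg[OF Dl_S_powr_bounded[OF k]] by (simp add: ennreal_mult)
      qed
    qed
    also have "\<dots> = ennreal (?c k) * \<integral>\<^sup>+u. ennreal (\<bar>f u\<bar> powr p) \<partial>lebesgue_on I"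
      using f by (intro nn_integral_cmult) measurable
    finally show "(\<integral>\<^sup>+u. ennreal \<bar>Dl k u\<bar> * ennreal (\<bar>S' k u * f u\<bar> powr p) \<partial>lebesgue_on I)
        \<le> ennreal (?c k) * \<integral>\<^sup>+u. ennreal (\<bar>f u\<bar> powr p) \<partial>lebesgue_on I" .
  qed
  also have "\<dots> = ennreal contraction_factor * (\<integral>\<^sup>+u. ennreal (\<bar>f u\<bar> powr p) \<partial>lebesgue_on I)"
    unfolding contraction_factor_def sum_distrib_right[symmetric]
    using ess_norm_inf_nonneg[OF Dl_S_powr_bounded] by (subst sum_ennreal) auto
  finally show ?thesis .
qed

lemma offset_norm_finite:
  assumes qS: "representatives q' S'"
  shows "offset_norm q' < \<infinity>"
proof -
  have "offset_norm q' = (\<Sum>k=1..n. \<integral>\<^sup>+u. ennreal \<bar>Dl k u\<bar> * ennreal (\<bar>q' k u\<bar> powr p) \<partial>lebesgue_on I)"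
    unfolding offset_norm_def
  proof (rule nn_integral_piecewise[of "\<lambda>k u. ennreal (\<bar>q' k u\<bar> powr p)"])
    fix k assume "k \<in> {1..n}"
    note [measurable] = representativesD(1)[OF qS this]
    show "(\<lambda>u. ennreal (\<bar>q' k u\<bar> powr p)) \<in> borel_measurable (lebesgue_on I)" by measurable
  qed
  also have "\<dots> < \<infinity>"
    unfolding infinity_ennreal_def
  proof (subst ennreal_sum_less_top, simp, intro ballI)
    fix k assume k: "k \<in> {1..n}"
    obtain B where B: "AE u in lebesgue_on I. \<bar>Dl k u\<bar> \<le> B" using Dl_bounded k by blast
    have [measurable]: "q k \<in> borel_measurable (lebesgue_on I)"
      using q_Lp_plus k by (simp add: Lp_plus_def)
    have "(\<integral>\<^sup>+u. ennreal \<bar>Dl k u\<bar> * ennreal (\<bar>q' k u\<bar> powr p) \<partial>lebesgue_on I)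
        \<le> (\<integral>\<^sup>+u. ennreal B * ennreal (\<bar>q k u\<bar> powr p) \<partial>lebesgue_on I)"
      using B representativesD(3)[OF qS k]
      by (intro nn_integral_mono_AE, eventually_elim) (auto intro: mult_mono)
    also have "\<dots> = ennreal B * (\<integral>\<^sup>+u. ennreal (\<bar>q k u\<bar> powr p) \<partial>lebesgue_on I)"
      by (intro nn_integral_cmult) measurable
    also have "\<dots> < \<infinity>"
      using Lp_plus_nn_integral_finite q_Lp_plus k by (simp add: ennreal_mult_less_top)
    finally show "(\<integral>\<^sup>+u. ennreal \<bar>Dl k u\<bar> * ennreal (\<bar>q' k u\<bar> powr p) \<partial>lebesgue_on I) < top"
      by simp
  qed
  finally show ?thesis .
qed

lemma nn_integral_RB_le:
  assumes qS: "representatives q' S'" and f: "f \<in> borel_measurable (lebesgue_on I)"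
    and lam: "0 < lam" "lam < 1"
  shows "(\<integral>\<^sup>+t. ennreal (\<bar>RB q' S' f t\<bar> powr p) \<partial>lebesgue_on I)
    \<le> ennreal (lam powr (1 - p)) * offset_norm q'
      + ennreal ((1 - lam) powr (1 - p)) * (ennreal contraction_factor * (\<integral>\<^sup>+u. ennreal (\<bar>f u\<bar> powr p) \<partial>lebesgue_on I))"
proof -
  let ?a = "\<lambda>t. \<bar>q' (piece t) (back t)\<bar> powr p" and ?b = "\<lambda>t. \<bar>S' (piece t) (back t) * f (back t)\<bar> powr p"
  have [measurable]: "(\<lambda>t. q' (piece t) (back t)) \<in> borel_measurable (lebesgue_on I)"
    using representativesD(1)[OF qS] by (rule measurable_piecewise)
  have "(\<lambda>t. (\<lambda>k u. S' k u * f u) (piece t) (back t)) \<in> borel_measurable (lebesgue_on I)"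
    using representativesD(2)[OF qS] f by (intro measurable_piecewise borel_measurable_times) auto
  then have [measurable]: "(\<lambda>t. S' (piece t) (back t) * f (back t)) \<in> borel_measurable (lebesgue_on I)"
    by simp
  have "(\<integral>\<^sup>+t. ennreal (\<bar>RB q' S' f t\<bar> powr p) \<partial>lebesgue_on I)
      \<le> (\<integral>\<^sup>+t. ennreal (lam powr (1 - p)) * ennreal (?a t) + ennreal ((1 - lam) powr (1 - p)) * ennreal (?b t) \<partial>lebesgue_on I)"
  proof (rule nn_integral_mono)
    fix t
    have "\<bar>RB q' S' f t\<bar> powr p \<le> (\<bar>q' (piece t) (back t)\<bar> + \<bar>S' (piece t) (back t) * f (back t)\<bar>) powr p"
      unfolding RB_def using p by (intro powr_mono2) (auto simp: abs_triangle_ineq)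
    also have "\<dots> \<le> lam powr (1 - p) * ?a t + (1 - lam) powr (1 - p) * ?b t"
      by (rule powr_add_le_weighted) (use lam p in auto)
    finally have "ennreal (\<bar>RB q' S' f t\<bar> powr p) \<le> ennreal (lam powr (1 - p) * ?a t + (1 - lam) powr (1 - p) * ?b t)"
      by (rule ennreal_leI)
    then show "ennreal (\<bar>RB q' S' f t\<bar> powr p)
        \<le> ennreal (lam powr (1 - p)) * ennreal (?a t) + ennreal ((1 - lam) powr (1 - p)) * ennreal (?b t)"
      by (simp add: ennreal_mult ennreal_plus)
  qed
  also have "\<dots> = ennreal (lam powr (1 - p)) * (\<integral>\<^sup>+t. ennreal (?a t) \<partial>lebesgue_on I)
      + ennreal ((1 - lam) powr (1 - p)) * (\<integral>\<^sup>+t. ennreal (?b t) \<partial>lebesgue_on I)"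
    by (subst nn_integral_add) (auto simp: nn_integral_cmult)
  also have "\<dots> \<le> ennreal (lam powr (1 - p)) * offset_norm q'
      + ennreal ((1 - lam) powr (1 - p)) * (ennreal contraction_factor * (\<integral>\<^sup>+u. ennreal (\<bar>f u\<bar> powr p) \<partial>lebesgue_on I))"
    unfolding offset_norm_def by (intro add_mono mult_left_mono nn_integral_linear_part_le[OF qS f]) auto
  finally show ?thesis .
qed

lemma RB_op_Lp_plus:
  assumes f: "Lp_plus p I f"
  shows "Lp_plus p I (RB_op x n l q S f)"
proof (rule Lp_plusI)
  have [measurable]: "f \<in> borel_measurable (lebesgue_on I)" using f by (simp add: Lp_plus_def)
  show "RB_op x n l q S f \<in> borel_measurable (lebesgue_on I)"
    using representativesD(1,2)[OF representatives_q_S] by (intro measurable_RB_op) auto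
  have "AE t in lebesgue_on I. 0 \<le> q (piece t) (back t) \<and> 0 \<le> S (piece t) (back t) \<and> 0 \<le> f (back t)"
  proof (rule AE_piecewise[where P = "\<lambda>k u. 0 \<le> q k u \<and> 0 \<le> S k u \<and> 0 \<le> f u"])
    fix k assume "k \<in> {1..n}"
    with q_nonneg_AE S_nonneg_AE f show "AE u in lebesgue_on I. 0 \<le> q k u \<and> 0 \<le> S k u \<and> 0 \<le> f u"
      unfolding Lp_plus_def by (metis (mono_tags) eventually_conj_iff)
  qed
  then show "AE t in lebesgue_on I. 0 \<le> RB_op x n l q S f t"
    by (rule AE_mp) (auto intro!: AE_I2 simp: RB_op_eq_RB RB_def)
  have "(\<integral>\<^sup>+t. ennreal (\<bar>RB_op x n l q S f t\<bar> powr p) \<partial>lebesgue_on I)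
      = (\<integral>\<^sup>+t. ennreal (\<bar>RB q S f t\<bar> powr p) \<partial>lebesgue_on I)"
    by (rule nn_integral_cong) (simp add: RB_op_eq_RB)
  also have "\<dots> \<le> ennreal ((1/2) powr (1 - p)) * offset_norm q
      + ennreal ((1 - 1/2) powr (1 - p)) * (ennreal contraction_factor * (\<integral>\<^sup>+u. ennreal (\<bar>f u\<bar> powr p) \<partial>lebesgue_on I))"
    by (rule nn_integral_RB_le[OF representatives_q_S]) auto
  also have "\<dots> < \<infinity>"
    using offset_norm_finite[OF representatives_q_S] Lp_plus_nn_integral_finite[OF f]
    by (simp add: ennreal_mult_less_top)
  finally show "(\<integral>\<^sup>+t. ennreal (\<bar>RB_op x n l q S f t\<bar> powr p) \<partial>lebesgue_on I) < \<infinity>" .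
qed

lemma d_p_RB_op_le:
  assumes f: "Lp_plus p I f" and g: "Lp_plus p I g"
  shows "d_p p I (RB_op x n l q S f) (RB_op x n l q S g) \<le> contraction_factor * d_p p I f g"
proof -
  have [measurable]: "f \<in> borel_measurable (lebesgue_on I)" "g \<in> borel_measurable (lebesgue_on I)"
    using f g by (simp_all add: Lp_plus_def)
  have RB_meas: "RB_op x n l q S h \<in> borel_measurable (lebesgue_on I)"
    if "h \<in> borel_measurable (lebesgue_on I)" for h
    using representativesD(1,2)[OF representatives_q_S] that by (intro measurable_RB_op)
  have "(\<integral>\<^sup>+t. ennreal (\<bar>RB_op x n l q S f t - RB_op x n l q S g t\<bar> powr p) \<partial>lebesgue_on I)
     = (\<integral>\<^sup>+t. ennreal (\<bar>S (piece t) (back t) * (\<lambda>u. f u - g u) (back t)\<bar> powr p) \<partial>lebesgue_on I)"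
    by (rule nn_integral_cong) (simp add: RB_op_eq_RB RB_def algebra_simps)
  also have "\<dots> \<le> ennreal contraction_factor * (\<integral>\<^sup>+u. ennreal (\<bar>f u - g u\<bar> powr p) \<partial>lebesgue_on I)"
    by (rule nn_integral_linear_part_le[OF representatives_q_S]) measurable
  finally have "enn2real (\<integral>\<^sup>+t. ennreal (\<bar>RB_op x n l q S f t - RB_op x n l q S g t\<bar> powr p) \<partial>lebesgue_on I)
      \<le> enn2real (ennreal contraction_factor * (\<integral>\<^sup>+u. ennreal (\<bar>f u - g u\<bar> powr p) \<partial>lebesgue_on I))"
    using nn_integral_powr_diff_finite[OF p f g] by (intro enn2real_mono) (auto simp: ennreal_mult_less_top)
  then show ?thesis
    using contraction_factor_nonneg RB_meas
    by (simp add: d_p_eq_nn_integral enn2real_mult)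
qed

definition "nonneg_coeffs q' S' \<longleftrightarrow> (\<forall>k\<in>{1..n}. \<forall>u\<in>I. 0 \<le> q' k u \<and> 0 \<le> S' k u)"

definition "iter q' S' m = (RB q' S' ^^ m) (\<lambda>_. 0)"

lemma iter_0 [simp]: "iter q' S' 0 = (\<lambda>_. 0)"
  by (simp add: iter_def)

lemma iter_Suc: "iter q' S' (Suc m) = RB q' S' (iter q' S' m)"
  by (simp add: iter_def)

lemma nonneg_coeffsD: "nonneg_coeffs q' S' \<Longrightarrow> t \<in> I \<Longrightarrow> 0 \<le> q' (piece t) (back t) \<and> 0 \<le> S' (piece t) (back t)"
  using piece_mem(1) back_mem unfolding nonneg_coeffs_def by blast

lemma iter_nonneg: "nonneg_coeffs q' S' \<Longrightarrow> t \<in> I \<Longrightarrow> 0 \<le> iter q' S' m t"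
proof (induction m arbitrary: t)
  case (Suc m)
  then show ?case using nonneg_coeffsD[OF Suc.prems] back_mem by (simp add: iter_Suc RB_def)
qed simp

lemma incseq_iter:
  assumes pos: "nonneg_coeffs q' S'" and t: "t \<in> I"
  shows "incseq (\<lambda>m. iter q' S' m t)"
proof (rule incseq_SucI)
  show "iter q' S' m t \<le> iter q' S' (Suc m) t" for m
    using t
  proof (induction m arbitrary: t)
    case 0
    then show ?case using iter_nonneg[OF pos, of t 1] by simp
  next
    case (Suc m)
    then have "S' (piece t) (back t) * iter q' S' m (back t) \<le> S' (piece t) (back t) * iter q' S' (Suc m) (back t)"
      using nonneg_coeffsD[OF pos] back_mem by (intro mult_left_mono) auto
    then show ?case by (simp add: iter_Suc[of _ _ "Suc m"] iter_Suc[of _ _ m] RB_def)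
  qed
qed

lemma measurable_iter: "representatives q' S' \<Longrightarrow> iter q' S' m \<in> borel_measurable (lebesgue_on I)"
  by (induction m) (auto simp: iter_Suc intro: measurable_RB dest: representativesD)

text \<open>With lam from ex_weight_powr_less_1, nn_integral_RB_le gives the recursion
  \<parallel>T^{m+1} 0\<parallel>^p \<le> a + b \<parallel>T^m 0\<parallel>^p with b < 1, so M = a / (1 - b) is preserved.\<close>
lemma nn_integral_iter_bounded:
  assumes qS: "representatives q' S'"
  obtains M where "\<And>m. (\<integral>\<^sup>+t. ennreal (\<bar>iter q' S' m t\<bar> powr p) \<partial>lebesgue_on I) \<le> ennreal M"
proof -
  obtain lam where lam: "0 < lam" "lam < 1" "(1 - lam) powr (1 - p) * contraction_factor < 1"
    using ex_weight_powr_less_1[OF contraction_factor_less_1] by blast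
  define a where "a = lam powr (1 - p) * enn2real (offset_norm q')"
  define b where "b = (1 - lam) powr (1 - p) * contraction_factor"
  have ab: "0 \<le> a" "0 \<le> b" "b < 1"
    using lam contraction_factor_nonneg by (auto simp: a_def b_def)
  define M where "M = a / (1 - b)"
  have M: "0 \<le> M" "a + b * M = M"
    using ab by (auto simp: M_def field_simps)
  have "(\<integral>\<^sup>+t. ennreal (\<bar>iter q' S' m t\<bar> powr p) \<partial>lebesgue_on I) \<le> ennreal M" for m
  proof (induction m)
    case (Suc m)
    have "(\<integral>\<^sup>+t. ennreal (\<bar>iter q' S' (Suc m) t\<bar> powr p) \<partial>lebesgue_on I)
        \<le> ennreal (lam powr (1 - p)) * offset_norm q'
          + ennreal ((1 - lam) powr (1 - p)) * (ennreal contraction_factor * (\<integral>\<^sup>+u. ennreal (\<bar>iter q' S' m u\<bar> powr p) \<partial>lebesgue_on I))"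
      unfolding iter_Suc by (rule nn_integral_RB_le[OF qS measurable_iter[OF qS] lam(1,2)])
    also have "\<dots> \<le> ennreal (lam powr (1 - p)) * ennreal (enn2real (offset_norm q'))
          + ennreal ((1 - lam) powr (1 - p)) * (ennreal contraction_factor * ennreal M)"
      using offset_norm_finite[OF qS] by (intro add_mono mult_left_mono Suc.IH) (auto simp: less_top)
    also have "\<dots> = ennreal (a + b * M)"
      using M(1) lam contraction_factor_nonneg
      by (simp add: a_def b_def ennreal_mult ennreal_plus mult.assoc)
    finally show ?case by (simp add: M(2))
  qed simp
  then show thesis by (rule that)
qed

lemma nn_integral_SUP_iter_finite:
  assumes qS: "representatives q' S'" and pos: "nonneg_coeffs q' S'"
  shows "(\<integral>\<^sup>+t. (SUP m. ennreal (\<bar>iter q' S' m t\<bar> powr p)) \<partial>lebesgue_on I) < \<infinity>"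
proof -
  obtain M where M: "\<And>m. (\<integral>\<^sup>+t. ennreal (\<bar>iter q' S' m t\<bar> powr p) \<partial>lebesgue_on I) \<le> ennreal M"
    using nn_integral_iter_bounded[OF qS] by blast
  have "(\<integral>\<^sup>+t. (SUP m. ennreal (\<bar>iter q' S' m t\<bar> powr p)) \<partial>lebesgue_on I)
      = (SUP m. \<integral>\<^sup>+t. ennreal (\<bar>iter q' S' m t\<bar> powr p) \<partial>lebesgue_on I)"
  proof (rule nn_integral_monotone_convergence_SUP_AE)
    show "AE t in lebesgue_on I. ennreal (\<bar>iter q' S' m t\<bar> powr p) \<le> ennreal (\<bar>iter q' S' (Suc m) t\<bar> powr p)" for m
      using iter_nonneg[OF pos] incseq_iter[OF pos] p
      by (intro AE_I2 ennreal_leI powr_mono2) (auto simp: incseq_Suc_iff)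
    show "(\<lambda>t. ennreal (\<bar>iter q' S' m t\<bar> powr p)) \<in> borel_measurable (lebesgue_on I)" for m
      using measurable_iter[OF qS] by measurable
  qed
  also have "\<dots> \<le> ennreal M"
    using M by (rule SUP_least)
  finally show ?thesis
    by (rule le_less_trans) simp
qed

lemma AE_iter_bounded:
  assumes qS: "representatives q' S'" and pos: "nonneg_coeffs q' S'"
  shows "AE t in lebesgue_on I. \<exists>B::nat. \<forall>m. iter q' S' m t \<le> real B"
proof -
  have [measurable]: "iter q' S' m \<in> borel_measurable (lebesgue_on I)" for m
    using measurable_iter[OF qS] .
  have "AE t in lebesgue_on I. (SUP m. ennreal (\<bar>iter q' S' m t\<bar> powr p)) \<noteq> \<infinity>"
    using nn_integral_SUP_iter_finite[OF qS pos] by (intro nn_integral_PInf_AE) auto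
  then show ?thesis
  proof (rule AE_mp, intro AE_I2 impI)
    fix t assume "t \<in> space (lebesgue_on I)" and fin: "(SUP m. ennreal (\<bar>iter q' S' m t\<bar> powr p)) \<noteq> \<infinity>"
    define R where "R = enn2real (SUP m. ennreal (\<bar>iter q' S' m t\<bar> powr p))"
    have SUP_eq: "(SUP m. ennreal (\<bar>iter q' S' m t\<bar> powr p)) = ennreal R"
      using fin unfolding R_def by (metis ennreal_enn2real infinity_ennreal_def less_top)
    have "ennreal (\<bar>iter q' S' m t\<bar> powr p) \<le> ennreal R" for m
      unfolding SUP_eq[symmetric] by (rule SUP_upper) simp
    then have R: "\<bar>iter q' S' m t\<bar> powr p \<le> R" for m
      by (subst (asm) ennreal_le_iff) (auto simp: R_def)
    have "iter q' S' m t \<le> max 1 R" for m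
    proof (cases "1 \<le> iter q' S' m t")
      case True
      then have "iter q' S' m t \<le> iter q' S' m t powr p"
        using powr_mono[OF p, of "iter q' S' m t"] by simp
      then show ?thesis using R[of m] True by simp
    qed simp
    moreover obtain B :: nat where "max 1 R \<le> real B" using real_arch_simple by blast
    ultimately show "\<exists>B::nat. \<forall>m. iter q' S' m t \<le> real B" by (meson order_trans)
  qed
qed

text \<open>Nonnegative representatives of q and S vanishing at x_0 and x_n.  S_reg is moreover cut
  off on the null set where the iterates for S_pos are unbounded, so that the iterates for
  (q_reg, S_reg) converge at every point of I.  The vanishing at the endpoints makes the limit
  vanish at the nodes (RB_fixed_node_eq_0), which the graph equation needs.\<close>
definition "q_reg k u = (if u = x 0 \<or> u = x n then 0 else max 0 (q k u))"

definition "S_pos k u = (if u = x 0 \<or> u = x n then 0 else max 0 (S k u))"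

definition "S_reg k u = (if \<exists>B::nat. \<forall>m. iter q_reg S_pos m u \<le> real B then S_pos k u else 0)"

definition "fixp t = (SUP m. iter q_reg S_reg m t)"

lemma AE_not_endpoint: "AE u in lebesgue_on I. u \<noteq> x 0 \<and> u \<noteq> x n"
proof -
  have "{x 0, x n} \<in> null_sets (lebesgue_on I)"
    using x_le[of 0 n] by (subst null_sets_restrict_space) auto
  from AE_not_in[OF this] show ?thesis by eventually_elim auto
qed

lemma representatives_q_reg_S_pos: "representatives q_reg S_pos"
  unfolding representatives_def
proof (intro ballI conjI)
  fix k assume k: "k \<in> {1..n}"
  note [measurable] = representativesD(1,2)[OF representatives_q_S k]
  have [measurable]: "{u \<in> space (lebesgue_on I). u = x 0 \<or> u = x n} \<in> sets (lebesgue_on I)"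
    by (auto simp: sets_restrict_space_iff Collect_disj_eq)
  show "q_reg k \<in> borel_measurable (lebesgue_on I)" "S_pos k \<in> borel_measurable (lebesgue_on I)"
    unfolding q_reg_def[abs_def] S_pos_def[abs_def] by measurable
  show "AE u in lebesgue_on I. q_reg k u = q k u"
    using AE_not_endpoint q_nonneg_AE[OF k] by eventually_elim (auto simp: q_reg_def)
  show "AE u in lebesgue_on I. S_pos k u = S k u"
    using AE_not_endpoint S_nonneg_AE[OF k] by eventually_elim (auto simp: S_pos_def)
qed

lemma nonneg_coeffs_q_reg_S_pos: "nonneg_coeffs q_reg S_pos"
  by (simp add: nonneg_coeffs_def q_reg_def S_pos_def)

lemma representatives_q_reg_S_reg: "representatives q_reg S_reg"
  unfolding representatives_def
proof (intro ballI conjI)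
  fix k assume k: "k \<in> {1..n}"
  note [measurable] = representativesD(1,2)[OF representatives_q_reg_S_pos k]
    measurable_iter[OF representatives_q_reg_S_pos]
  show "q_reg k \<in> borel_measurable (lebesgue_on I)" by measurable
  show "S_reg k \<in> borel_measurable (lebesgue_on I)" unfolding S_reg_def[abs_def] by measurable
  show "AE u in lebesgue_on I. q_reg k u = q k u"
    by (rule representativesD(3)[OF representatives_q_reg_S_pos k])
  show "AE u in lebesgue_on I. S_reg k u = S k u"
    using AE_iter_bounded[OF representatives_q_reg_S_pos nonneg_coeffs_q_reg_S_pos]
      representativesD(4)[OF representatives_q_reg_S_pos k]
    by eventually_elim (auto simp: S_reg_def)
qed

lemma nonneg_coeffs_q_reg_S_reg: "nonneg_coeffs q_reg S_reg"
  by (simp add: nonneg_coeffs_def q_reg_def S_pos_def S_reg_def)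

lemma iter_S_reg_le: "t \<in> I \<Longrightarrow> iter q_reg S_reg m t \<le> iter q_reg S_pos m t"
proof (induction m arbitrary: t)
  case (Suc m)
  have "S_reg (piece t) (back t) \<le> S_pos (piece t) (back t)"
    using nonneg_coeffsD[OF nonneg_coeffs_q_reg_S_pos Suc.prems] by (simp add: S_reg_def)
  then have "S_reg (piece t) (back t) * iter q_reg S_reg m (back t) \<le> S_pos (piece t) (back t) * iter q_reg S_pos m (back t)"
    using Suc iter_nonneg[OF nonneg_coeffs_q_reg_S_reg] nonneg_coeffsD[OF nonneg_coeffs_q_reg_S_pos] back_mem
    by (intro mult_mono) auto
  then show ?case by (simp add: iter_Suc RB_def)
qed simp

lemma iter_S_reg_bounded:
  assumes t: "t \<in> I"
  shows "bdd_above (range (\<lambda>m. iter q_reg S_reg m t))"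
proof (cases "\<exists>B::nat. \<forall>m. iter q_reg S_pos m (back t) \<le> real B")
  case True
  then obtain B :: nat where B: "\<And>m. iter q_reg S_pos m (back t) \<le> real B" by blast
  have "iter q_reg S_reg m t \<le> q_reg (piece t) (back t) + S_pos (piece t) (back t) * real B" for m
  proof (cases m)
    case (Suc m')
    have "iter q_reg S_reg m' (back t) \<le> real B"
      using iter_S_reg_le[OF back_mem[OF t]] B order_trans by blast
    then have "S_reg (piece t) (back t) * iter q_reg S_reg m' (back t) \<le> S_pos (piece t) (back t) * real B"
      using True nonneg_coeffsD[OF nonneg_coeffs_q_reg_S_pos t] by (auto simp: S_reg_def intro: mult_left_mono)
    then show ?thesis using Suc by (simp add: iter_Suc RB_def)
  qed (use nonneg_coeffsD[OF nonneg_coeffs_q_reg_S_pos t] in simp)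
  then show ?thesis by (rule bdd_aboveI2)
next
  case False
  then have "iter q_reg S_reg m t \<le> q_reg (piece t) (back t)" for m
    using nonneg_coeffsD[OF nonneg_coeffs_q_reg_S_pos t] by (cases m) (auto simp: iter_Suc RB_def S_reg_def)
  then show ?thesis by (rule bdd_aboveI2)
qed

lemma iter_tendsto_fixp: "t \<in> I \<Longrightarrow> (\<lambda>m. iter q_reg S_reg m t) \<longlonglongrightarrow> fixp t"
  unfolding fixp_def
  by (intro LIMSEQ_incseq_SUP iter_S_reg_bounded incseq_iter[OF nonneg_coeffs_q_reg_S_reg])

lemma fixp_eq_RB: "t \<in> I \<Longrightarrow> fixp t = RB q_reg S_reg fixp t"
proof -
  assume t: "t \<in> I"
  have "(\<lambda>m. iter q_reg S_reg (Suc m) t) \<longlonglongrightarrow> fixp t"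
    using iter_tendsto_fixp[OF t] by (rule LIMSEQ_Suc)
  moreover have "(\<lambda>m. iter q_reg S_reg (Suc m) t) \<longlonglongrightarrow> RB q_reg S_reg fixp t"
    unfolding iter_Suc RB_def using iter_tendsto_fixp[OF back_mem[OF t]] by (intro tendsto_intros)
  ultimately show ?thesis by (rule LIMSEQ_unique)
qed

lemma fixp_nonneg: "t \<in> I \<Longrightarrow> 0 \<le> fixp t"
  using iter_tendsto_fixp iter_nonneg[OF nonneg_coeffs_q_reg_S_reg]
  by (intro LIMSEQ_le_const[of "\<lambda>m. iter q_reg S_reg m t"]) auto

lemma measurable_fixp: "fixp \<in> borel_measurable (lebesgue_on I)"
  by (rule borel_measurable_LIMSEQ_real[where u = "iter q_reg S_reg"])
    (auto intro: iter_tendsto_fixp measurable_iter[OF representatives_q_reg_S_reg])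

lemma fixp_Lp_plus: "Lp_plus p I fixp"
proof (rule Lp_plusI[OF measurable_fixp])
  show "AE t in lebesgue_on I. 0 \<le> fixp t" by (rule AE_I2) (simp add: fixp_nonneg)
  have "ennreal (\<bar>fixp t\<bar> powr p) \<le> (SUP m. ennreal (\<bar>iter q_reg S_reg m t\<bar> powr p))" if t: "t \<in> I" for t
  proof (rule LIMSEQ_le_const2)
    show "(\<lambda>m. ennreal (\<bar>iter q_reg S_reg m t\<bar> powr p)) \<longlonglongrightarrow> ennreal (\<bar>fixp t\<bar> powr p)"
      using iter_tendsto_fixp[OF t] p by (intro tendsto_ennrealI tendsto_powr2 tendsto_rabs) auto
    show "\<exists>N. \<forall>m\<ge>N. ennreal (\<bar>iter q_reg S_reg m t\<bar> powr p) \<le> (SUP m. ennreal (\<bar>iter q_reg S_reg m t\<bar> powr p))"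
      by (intro exI allI impI SUP_upper) simp
  qed
  then have "(\<integral>\<^sup>+t. ennreal (\<bar>fixp t\<bar> powr p) \<partial>lebesgue_on I)
      \<le> (\<integral>\<^sup>+t. (SUP m. ennreal (\<bar>iter q_reg S_reg m t\<bar> powr p)) \<partial>lebesgue_on I)"
    by (intro nn_integral_mono) simp
  also have "\<dots> < \<infinity>"
    by (rule nn_integral_SUP_iter_finite[OF representatives_q_reg_S_reg nonneg_coeffs_q_reg_S_reg])
  finally show "(\<integral>\<^sup>+t. ennreal (\<bar>fixp t\<bar> powr p) \<partial>lebesgue_on I) < \<infinity>" .
qed

lemma RB_op_fixed_AE:
  assumes qS: "representatives q' S'" and fixed: "\<forall>t\<in>I. \<phi> t = RB q' S' \<phi> t"
  shows "AE t in lebesgue_on I. RB_op x n l q S \<phi> t = \<phi> t"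
proof -
  have "AE t in lebesgue_on I. q' (piece t) (back t) = q (piece t) (back t) \<and> S' (piece t) (back t) = S (piece t) (back t)"
    using representativesD(3,4)[OF qS]
    by (intro AE_piecewise[where P = "\<lambda>k u. q' k u = q k u \<and> S' k u = S k u"]) (auto elim: AE_mp)
  then show ?thesis
    by (rule AE_mp) (use fixed in \<open>auto intro!: AE_I2 simp: RB_op_eq_RB RB_def\<close>)
qed

lemma RB_op_fixp_AE: "AE t in lebesgue_on I. RB_op x n l q S fixp t = fixp t"
  using representatives_q_reg_S_reg fixp_eq_RB by (intro RB_op_fixed_AE) auto

lemma AE_eq_fixp:
  assumes g: "Lp_plus p I g" and fixed: "AE t in lebesgue_on I. RB_op x n l q S g t = g t"
  shows "AE t in lebesgue_on I. g t = fixp t"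
proof (rule AE_eq_if_fixed_by_contraction[where T = "RB_op x n l q S", OF p g fixp_Lp_plus])
  have "RB_op x n l q S h \<in> borel_measurable (lebesgue_on I)" if "Lp_plus p I h" for h
    using representativesD(1,2)[OF representatives_q_S] that
    by (intro measurable_RB_op) (auto simp: Lp_plus_def)
  then show "RB_op x n l q S g \<in> borel_measurable (lebesgue_on I)"
    "RB_op x n l q S fixp \<in> borel_measurable (lebesgue_on I)"
    using g fixp_Lp_plus by blast+
qed (use fixed d_p_RB_op_le[OF g fixp_Lp_plus] contraction_factor_less_1 RB_op_fixp_AE in auto)

lemma graph_on_fixp: "graph_on I fixp = (\<Union>i\<in>{1..n}. ifs_map (l i) (q_reg i) (S_reg i) ` graph_on I fixp)"
  using fixp_eq_RB by (intro graph_on_eq_Union_ifs_map) (auto simp: q_reg_def S_pos_def S_reg_def)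

lemma AE_eq_fixp_if_graph_on_eq:
  assumes g: "Lp_plus p I g"
    and graph: "graph_on I g = (\<Union>i\<in>{1..n}. ifs_map (l i) (q_reg i) (S_reg i) ` graph_on I g)"
  shows "AE t in lebesgue_on I. g t = fixp t"
  using g RB_op_fixed_AE[OF representatives_q_reg_S_reg RB_fixed_if_graph_on_eq[OF graph]]
  by (rule AE_eq_fixp)

end

theorem theorem5p1:
  fixes n :: nat and x :: "nat \<Rightarrow> real" and p :: real
    and l Dl q S :: "nat \<Rightarrow> real \<Rightarrow> real"
  assumes n: "n \<ge> 1"
    and x0: "0 \<le> x 0"
    and xmono: "\<forall>i<n. x i < x (Suc i)"
    and p: "1 \<le> p"
    and l_homeo: "\<forall>i\<in>{1..n}. \<exists>g. homeomorphism {x 0 .. x n} {x (i - 1) .. x i} (l i) g"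
    and l_contr: "\<forall>i\<in>{1..n}. \<exists>C<1. C-lipschitz_on {x 0 .. x n} (l i)"
    and l_ends: "\<forall>i\<in>{1..n}. l i (x 0) = x (i - 1) \<and> l i (x n) = x i"
    and l_deriv: "\<forall>i\<in>{1..n}. (AE t in lebesgue_on {x 0 .. x n}.
                     (l i has_real_derivative Dl i t) (at t within {x 0 .. x n}))"
    and Dl_Linf: "\<forall>i\<in>{1..n}. Linf_plus {x 0 .. x n} (Dl i)"
    and q_Lp: "\<forall>i\<in>{1..n}. Lp_plus p {x 0 .. x n} (q i)"
    and S_Linf: "\<forall>i\<in>{1..n}. Linf_plus {x 0 .. x n} (S i)"
    and small: "(\<Sum>i=1..n. ess_norm_inf {x 0 .. x n} (\<lambda>t. Dl i t * S i t powr p)) < 1"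
  shows
    "(\<forall>g. Lp_plus p {x 0 .. x n} g \<longrightarrow> Lp_plus p {x 0 .. x n} (RB_op x n l q S g))
   \<and> (\<exists>c. 0 \<le> c \<and> c < 1 \<and>
        (\<forall>g h. Lp_plus p {x 0 .. x n} g \<longrightarrow> Lp_plus p {x 0 .. x n} h \<longrightarrow>
           d_p p {x 0 .. x n} (RB_op x n l q S g) (RB_op x n l q S h)
             \<le> c * d_p p {x 0 .. x n} g h))
   \<and> (\<exists>fs. Lp_plus p {x 0 .. x n} fs
        \<and> (AE t in lebesgue_on {x 0 .. x n}.
             fs t = (\<Sum>i=1..n. q i (the_inv_into {x 0 .. x n} (l i) t) * indicator (subint x n i) t)
                  + (\<Sum>i=1..n. S i (the_inv_into {x 0 .. x n} (l i) t)
                               * fs (the_inv_into {x 0 .. x n} (l i) t) * indicator (subint x n i) t))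
        \<and> (\<forall>g. Lp_plus p {x 0 .. x n} g \<longrightarrow>
             (AE t in lebesgue_on {x 0 .. x n}. RB_op x n l q S g t = g t) \<longrightarrow>
             (AE t in lebesgue_on {x 0 .. x n}. g t = fs t))
        \<and> (\<exists>q' S' f.
             (\<forall>i\<in>{1..n}. (AE t in lebesgue_on {x 0 .. x n}. q' i t = q i t)
                         \<and> (AE t in lebesgue_on {x 0 .. x n}. S' i t = S i t)
                         \<and> (\<forall>t\<in>{x 0 .. x n}. 0 \<le> q' i t \<and> 0 \<le> S' i t))
           \<and> (AE t in lebesgue_on {x 0 .. x n}. f t = fs t)
           \<and> (\<forall>t\<in>{x 0 .. x n}. 0 \<le> f t)
           \<and> graph_on {x 0 .. x n} f
               = (\<Union>i\<in>{1..n}. ifs_map (l i) (q' i) (S' i) ` graph_on {x 0 .. x n} f)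
           \<and> (\<forall>g. Lp_plus p {x 0 .. x n} g \<longrightarrow> (\<forall>t\<in>{x 0 .. x n}. 0 \<le> g t) \<longrightarrow>
                graph_on {x 0 .. x n} g
                  = (\<Union>i\<in>{1..n}. ifs_map (l i) (q' i) (S' i) ` graph_on {x 0 .. x n} g) \<longrightarrow>
                (AE t in lebesgue_on {x 0 .. x n}. g t = fs t))))"
proof -
  interpret RB_setting n x l Dl p q S
    using assms by unfold_locales (auto simp: Linf_plus_def)
  have coeffs: "\<forall>i\<in>{1..n}. (AE t in lebesgue_on I. q_reg i t = q i t)
      \<and> (AE t in lebesgue_on I. S_reg i t = S i t) \<and> (\<forall>t\<in>I. 0 \<le> q_reg i t \<and> 0 \<le> S_reg i t)"
    using representativesD(3,4)[OF representatives_q_reg_S_reg] nonneg_coeffs_q_reg_S_reg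
    by (auto simp: nonneg_coeffs_def)
  have self_referential: "AE t in lebesgue_on I.
      fixp t = (\<Sum>i=1..n. q i (the_inv_into I (l i) t) * indicator (subint x n i) t)
        + (\<Sum>i=1..n. S i (the_inv_into I (l i) t) * fixp (the_inv_into I (l i) t) * indicator (subint x n i) t)"
    using RB_op_fixp_AE by eventually_elim (simp add: RB_op_def)
  show ?thesis
    by (intro conjI exI[of _ contraction_factor] exI[of _ fixp] allI impI;
        (fact RB_op_Lp_plus contraction_factor_nonneg contraction_factor_less_1 d_p_RB_op_le
          fixp_Lp_plus self_referential AE_eq_fixp)?)
      (rule exI[of _ q_reg], rule exI[of _ S_reg], rule exI[of _ fixp],
        use coeffs fixp_nonneg graph_on_fixp AE_eq_fixp_if_graph_on_eq in auto)
qed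

end
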